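(* Let $0<\varepsilon\le1$ and let $e_n$ ($n\ge0$) be the normalized eigenvectors of $h_\varepsilon$. Then for every $n$, $e_n\notin D(S_\varepsilon)$ and $e_n\notin D(S^*_\varepsilon)$.
   Context: Work in $L^2(\mathbb{R})$. Let $q$ be multiplication by $x$, $p=-i\,d/dx$, $t=q^{-1}p$ with $D(t)=\{f\in D(p):pf\in D(q^{-1})\}$, $t^*$ its adjoint; $L^2_0$, $L^2_1$ the even/odd subspaces. For $0<\varepsilon\le1$, $h_\varepsilon=\frac12(\varepsilon p^2+q^2)$ on $D(p^2)\cap D(q^2)$; its spectrum is $\{\sqrt\varepsilon(n+\frac12)\}_{n\ge0}$ with normalized eigenvectors $e_n(x)=c_nH_n(x/\varepsilon^{1/4})e^{-x^2/(2\sqrt\varepsilon)}$, $H_n$ the Hermite polynomials, $c_n$ normalizing constants. Define $S_\varepsilon$ in $L^2_0$ by $D(S_\varepsilon)=\{f\in L^2_0\cap\bigcap_nD(t^{2n+1}):\sum_{n=0}^N\frac{(-1)^n}{2n+1}(\sqrt\varepsilon t)^{2n+1}f$ converges in norm$\}$, $S_\varepsilon f=-\varepsilon^{-1/2}\sum_{n\ge0}\frac{(-1)^n}{2n+1}(\sqrt\varepsilon t)^{2n+1}f$, and $S^*_\varepsilon$ (notation only) in $L^2_1$ by the same formulas with $t^*$ and $L^2_1$. *)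

theory Defs
  imports "HOL-Analysis.Analysis"
begin

text \<open>Elements of L^2(R) are represented by functions real => complex; two
functions represent the same element iff they agree almost everywhere.
Operators are represented by relations between representatives.\<close>

definition L2 :: "(real \<Rightarrow> complex) set" where
  "L2 = {f. f \<in> borel_measurable lborel \<and> integrable lborel (\<lambda>x. (cmod (f x))^2)}"

definition L2_norm :: "(real \<Rightarrow> complex) \<Rightarrow> real" where
  "L2_norm f = sqrt (LINT x|lborel. (cmod (f x))^2)"

definition L2_inner :: "(real \<Rightarrow> complex) \<Rightarrow> (real \<Rightarrow> complex) \<Rightarrow> complex" where
  "L2_inner f g = (LINT x|lborel. f x * cnj (g x))"

definition L2_even :: "(real \<Rightarrow> complex) set" where
  "L2_even = {f \<in> L2. AE x in lborel. f (- x) = f x}"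

definition L2_odd :: "(real \<Rightarrow> complex) set" where
  "L2_odd = {f \<in> L2. AE x in lborel. f (- x) = - f x}"

text \<open>p = -i d/dx on its maximal domain H^1(R): p_rel f h means f in D(p) and h represents p f,
i.e. f agrees a.e. with an absolutely continuous function c + int_0^x g with g = i h in L^2.\<close>
definition p_rel :: "(real \<Rightarrow> complex) \<Rightarrow> (real \<Rightarrow> complex) \<Rightarrow> bool" where
  "p_rel f h \<longleftrightarrow> f \<in> L2 \<and> h \<in> L2 \<and>
     (\<exists>c. AE x in lborel. f x = c + interval_lebesgue_integral lborel (ereal 0) (ereal x) (\<lambda>s. \<i> * h s))"

definition qinv_rel :: "(real \<Rightarrow> complex) \<Rightarrow> (real \<Rightarrow> complex) \<Rightarrow> bool" where
  "qinv_rel f g \<longleftrightarrow> f \<in> L2 \<and> g \<in> L2 \<and> (AE x in lborel. g x = f x / complex_of_real x)"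

definition t_rel :: "(real \<Rightarrow> complex) \<Rightarrow> (real \<Rightarrow> complex) \<Rightarrow> bool" where
  "t_rel f g \<longleftrightarrow> (\<exists>h. p_rel f h \<and> qinv_rel h g)"

definition tadj_rel :: "(real \<Rightarrow> complex) \<Rightarrow> (real \<Rightarrow> complex) \<Rightarrow> bool" where
  "tadj_rel g w \<longleftrightarrow> g \<in> L2 \<and> w \<in> L2 \<and>
     (\<forall>f u. t_rel f u \<longrightarrow> L2_inner u g = L2_inner f w)"

fun rel_pow :: "(('a \<Rightarrow> 'b) \<Rightarrow> ('a \<Rightarrow> 'b) \<Rightarrow> bool) \<Rightarrow> nat \<Rightarrow> ('a \<Rightarrow> 'b) \<Rightarrow> ('a \<Rightarrow> 'b) \<Rightarrow> bool" where
  "rel_pow T 0 f g = (f = g)"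
| "rel_pow T (Suc k) f g = (\<exists>h. T f h \<and> rel_pow T k h g)"

text \<open>Domain of S_eps (T = t, V = L^2_0) resp. S^*_eps (T = t^*, V = L^2_1):
f in V, f in D(T^(2n+1)) for all n, and the partial sums
sum_{n=0}^N (-1)^n/(2n+1) (sqrt eps T)^(2n+1) f converge in L^2 norm.\<close>
definition D_series :: "real \<Rightarrow> ((real \<Rightarrow> complex) \<Rightarrow> (real \<Rightarrow> complex) \<Rightarrow> bool)
     \<Rightarrow> (real \<Rightarrow> complex) set \<Rightarrow> (real \<Rightarrow> complex) set" where
  "D_series \<epsilon> T V = {f. f \<in> V \<and> (\<forall>n. \<exists>g. rel_pow T (2*n+1) f g) \<and>
     (\<exists>u. (\<forall>n. rel_pow T (2*n+1) f (u n)) \<and>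
       (\<exists>F\<in>L2. (\<lambda>N. L2_norm (\<lambda>x. (\<Sum>n\<le>N. complex_of_real ((-1)^n / real (2*n+1) * sqrt \<epsilon> ^ (2*n+1)) * u n x) - F x))
                 \<longlonglongrightarrow> 0))}"

definition D_S :: "real \<Rightarrow> (real \<Rightarrow> complex) set" where
  "D_S \<epsilon> = D_series \<epsilon> t_rel L2_even"

definition D_Sstar :: "real \<Rightarrow> (real \<Rightarrow> complex) set" where
  "D_Sstar \<epsilon> = D_series \<epsilon> tadj_rel L2_odd"

fun hermite :: "nat \<Rightarrow> real \<Rightarrow> real" where
  "hermite 0 x = 1"
| "hermite (Suc 0) x = 2 * x"
| "hermite (Suc (Suc n)) x = 2 * x * hermite (Suc n) x - 2 * real (Suc n) * hermite n x"

definition herm_unnorm :: "real \<Rightarrow> nat \<Rightarrow> real \<Rightarrow> real" where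
  "herm_unnorm \<epsilon> n x = hermite n (x / \<epsilon> powr (1/4)) * exp (- (x^2) / (2 * sqrt \<epsilon>))"

definition herm_const :: "real \<Rightarrow> nat \<Rightarrow> real" where
  "herm_const \<epsilon> n = 1 / sqrt (LINT x|lborel. (herm_unnorm \<epsilon> n x)^2)"

definition eigvec :: "real \<Rightarrow> nat \<Rightarrow> real \<Rightarrow> complex" where
  "eigvec \<epsilon> n x = complex_of_real (herm_const \<epsilon> n * herm_unnorm \<epsilon> n x)"

end

theory Submission
  imports Defs "HOL-Probability.Distributions" "HOL-Computational_Algebra.Polynomial"
    "HOL-Real_Asymp.Real_Asymp"
begin

text \<open>With \<open>s = \<epsilon>\<^sup>1\<^sup>/\<^sup>4\<close> and \<open>c = 1/(2s\<^sup>2)\<close>, the eigenvector \<open>e\<^sub>n\<close> is a multiple of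
  \<open>H\<^sub>n(x/s) exp(-c x\<^sup>2)\<close>. On functions \<open>P(x) exp(-c x\<^sup>2)\<close> with \<open>P\<close> of the parity of \<open>n\<close>, the
  operator \<open>t\<close> (for even \<open>n\<close>) resp. \<open>t\<^sup>*\<close> (for odd \<open>n\<close>) acts as \<open>-\<i>\<close> times a map on \<open>P\<close> of the form
  \<open>P \<mapsto> (terms of degree below deg P) - P/s\<^sup>2\<close>. As \<open>H\<^sub>n\<close> is orthogonal for the weight
  \<open>exp(-x\<^sup>2/s\<^sup>2)\<close> to all polynomials of lower degree, this gives \<open>\<langle>t\<^sup>k e\<^sub>n, e\<^sub>n\<rangle> = (\<i>/\<surd>\<epsilon>)\<^sup>k\<close>,
  so the \<open>k\<close>-th term of the series defining \<open>S\<^sub>\<epsilon> e\<^sub>n\<close> has inner product \<open>\<i>/(2k+1)\<close> with \<open>e\<^sub>n\<close>.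
  The partial sums therefore cannot converge, not even weakly. The opposite parity is excluded
  outright because \<open>e\<^sub>n\<close> is even or odd. The action of \<open>t\<^sup>*\<close> is identified by testing against
  trapezoidal functions vanishing near \<open>0\<close>, which lie in \<open>D(t)\<close>.\<close>

section \<open>Integration on the real line and square-integrable functions\<close>

lemma integral_derivative_eq_0:
  fixes F f :: "real \<Rightarrow> real"
  assumes "\<And>x. (F has_real_derivative f x) (at x)" and "continuous_on UNIV f"
    and "integrable lborel f" and "(F \<longlongrightarrow> 0) at_top" and "(F \<longlongrightarrow> 0) at_bot"
  shows "integral\<^sup>L lborel f = 0"
proof -
  have "(LBINT x=-\<infinity>..\<infinity>. f x) = 0 - 0"
    using assms
    by (intro interval_integral_FTC_integrable[where F = F])
       (auto simp: has_real_derivative_iff_has_vector_derivative continuous_on_eq_continuous_at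
         set_integrable_def ereal_tendsto_simps)
  then show ?thesis
    by (simp add: interval_lebesgue_integral_def set_lebesgue_integral_def)
qed

lemma AE_exists_between:
  assumes E: "AE x in lborel. x \<in> E" and "a < (b :: real)"
  shows "\<exists>x\<in>E. a < x \<and> x < b"
proof (rule ccontr)
  assume "\<not> ?thesis"
  then have "{a<..<b} \<subseteq> {x. x \<notin> E}"
    by auto
  moreover from E obtain N where "{x. x \<notin> E} \<subseteq> N" "N \<in> null_sets lborel"
    by (auto simp: eventually_ae_filter)
  ultimately have "emeasure lborel {a<..<b} = 0"
    by (metis emeasure_eq_0 null_setsD1 null_setsD2 order_trans sets_lborel atLeastLessThan_borel
        borel_open open_greaterThanLessThan)
  then show False
    using \<open>a < b\<close> by simp
qed

lemma integral_pos_if_continuous: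
  fixes f :: "real \<Rightarrow> real"
  assumes "continuous_on UNIV f" and "\<And>x. 0 \<le> f x" and "integrable lborel f" and "f a > 0"
  shows "integral\<^sup>L lborel f > 0"
proof (rule ccontr)
  assume "\<not> ?thesis"
  with assms(2) have "integral\<^sup>L lborel f = 0"
    by (simp add: antisym integral_nonneg_AE)
  then have ae: "AE x in lborel. f x = 0"
    using integral_nonneg_eq_0_iff_AE[OF assms(3)] assms(2) by simp
  obtain \<delta> where "\<delta> > 0" and \<delta>: "\<And>y. dist y a < \<delta> \<Longrightarrow> dist (f y) (f a) < f a"
    using assms(1,4) unfolding continuous_on_eq_continuous_at[OF open_UNIV] continuous_at_eps_delta
    by blast
  obtain y where "f y = 0" "a - \<delta> < y" "y < a + \<delta>"
    using AE_exists_between[of "{x. f x = 0}" "a - \<delta>" "a + \<delta>"] ae \<open>\<delta> > 0\<close> by auto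
  with \<delta>[of y] assms(4) show False
    by (simp add: dist_real_def abs_less_iff)
qed

lemma L2_measurable: "f \<in> L2 \<Longrightarrow> f \<in> borel_measurable lborel"
  by (simp add: L2_def)

lemma L2_integrable_square: "f \<in> L2 \<Longrightarrow> integrable lborel (\<lambda>x. (cmod (f x))\<^sup>2)"
  by (simp add: L2_def)

lemma borel_measurable_cnj [measurable]:
  "g \<in> borel_measurable M \<Longrightarrow> (\<lambda>x. cnj (g x)) \<in> borel_measurable M"
  by (rule borel_measurable_continuous_on[of cnj]) (auto intro: continuous_intros)

lemma L2_zero: "(\<lambda>x. 0) \<in> L2"
  by (simp add: L2_def)

lemma L2_cnj: "f \<in> L2 \<Longrightarrow> (\<lambda>x. cnj (f x)) \<in> L2"
  by (auto simp: L2_def)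

lemma L2_cmult: "f \<in> L2 \<Longrightarrow> (\<lambda>x. a * f x) \<in> L2"
  by (auto simp: L2_def norm_mult power_mult_distrib)

lemma L2_diff:
  assumes f: "f \<in> L2" and g: "g \<in> L2"
  shows "(\<lambda>x. f x - g x) \<in> L2"
proof -
  have meas: "(\<lambda>x. f x - g x) \<in> borel_measurable lborel"
    using L2_measurable[OF f] L2_measurable[OF g] by measurable
  have "integrable lborel (\<lambda>x. (cmod (f x - g x))\<^sup>2)"
  proof (rule Bochner_Integration.integrable_bound)
    show "integrable lborel (\<lambda>x. 2 * (cmod (f x))\<^sup>2 + 2 * (cmod (g x))\<^sup>2)"
      using L2_integrable_square[OF f] L2_integrable_square[OF g] by simp
    show "(\<lambda>x. (cmod (f x - g x))\<^sup>2) \<in> borel_measurable lborel"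
      using meas by measurable
    have "(cmod (f x - g x))\<^sup>2 \<le> 2 * (cmod (f x))\<^sup>2 + 2 * (cmod (g x))\<^sup>2" for x
    proof -
      have "(cmod (f x - g x))\<^sup>2 \<le> (cmod (f x) + cmod (g x))\<^sup>2"
        using norm_triangle_ineq4 by (intro power_mono) auto
      also have "\<dots> \<le> 2 * (cmod (f x))\<^sup>2 + 2 * (cmod (g x))\<^sup>2"
        using sum_squares_bound[of "cmod (f x)" "cmod (g x)"] by (simp add: power2_sum)
      finally show ?thesis .
    qed
    then show "AE x in lborel. norm ((cmod (f x - g x))\<^sup>2)
        \<le> norm (2 * (cmod (f x))\<^sup>2 + 2 * (cmod (g x))\<^sup>2)"
      by (intro AE_I2) simp
  qed
  with meas show ?thesis
    by (simp add: L2_def)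
qed

lemma L2_add: "f \<in> L2 \<Longrightarrow> g \<in> L2 \<Longrightarrow> (\<lambda>x. f x + g x) \<in> L2"
  using L2_diff[of f "\<lambda>x. - g x"] L2_cmult[of g "-1"] by simp

lemma L2_sum: "(\<And>k. k \<in> A \<Longrightarrow> u k \<in> L2) \<Longrightarrow> (\<lambda>x. \<Sum>k\<in>A. u k x) \<in> L2"
proof (induction A rule: infinite_finite_induct)
  case (insert k A)
  then show ?case
    by (simp add: L2_add)
qed (simp_all add: L2_zero)

lemma L2_of_real_bounded_support:
  assumes meas: "\<phi> \<in> borel_measurable borel"
    and bound: "\<And>x. \<bar>\<phi> x\<bar> \<le> C" and support: "\<And>x. x \<notin> {l..r} \<Longrightarrow> \<phi> x = 0"
  shows "(\<lambda>x. a * complex_of_real (\<phi> x)) \<in> L2"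
proof -
  have "integrable lborel (\<lambda>x. (cmod (a * complex_of_real (\<phi> x)))\<^sup>2)"
  proof (rule Bochner_Integration.integrable_bound)
    show "integrable lborel (\<lambda>x. (cmod a * C)\<^sup>2 * indicator {l..r} x :: real)"
      by (intro integrable_mult_right integrable_real_indicator) (auto simp: emeasure_lborel_Icc_eq)
    have "(cmod a * \<bar>\<phi> x\<bar>)\<^sup>2 \<le> (cmod a * C)\<^sup>2" for x
      using bound[of x] by (intro power_mono mult_left_mono) auto
    then show "AE x in lborel. norm ((cmod (a * complex_of_real (\<phi> x)))\<^sup>2)
        \<le> norm ((cmod a * C)\<^sup>2 * indicator {l..r} x :: real)"
      using support by (intro AE_I2) (auto simp: norm_mult indicator_def)
  qed (use meas in measurable)
  with meas show ?thesis
    by (simp add: L2_def)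
qed

lemma L2_set_integrable_Icc:
  assumes f: "f \<in> L2"
  shows "set_integrable lborel {a..b} f"
  unfolding set_integrable_def
proof (rule Bochner_Integration.integrable_bound)
  show "integrable lborel (\<lambda>x. indicator {a..b} x + (cmod (f x))\<^sup>2 :: real)"
    using L2_integrable_square[OF f]
    by (intro Bochner_Integration.integrable_add)
       (auto intro!: integrable_real_indicator simp: emeasure_lborel_Icc_eq)
  show "(\<lambda>x. indicat_real {a..b} x *\<^sub>R f x) \<in> borel_measurable lborel"
    using L2_measurable[OF f] by measurable
  have "cmod (f x) \<le> 1 + (cmod (f x))\<^sup>2" for x
    using zero_le_power2[of "cmod (f x) - 1/2"] by (simp add: power2_eq_square algebra_simps)
  then show "AE x in lborel. norm (indicat_real {a..b} x *\<^sub>R f x)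
      \<le> norm (indicator {a..b} x + (cmod (f x))\<^sup>2 :: real)"
    by (intro AE_I2) (auto simp: indicator_def)
qed

lemma L2_integrable_inner:
  assumes f: "f \<in> L2" and g: "g \<in> L2"
  shows "integrable lborel (\<lambda>x. f x * cnj (g x))"
proof (rule Bochner_Integration.integrable_bound)
  show "integrable lborel (\<lambda>x. (cmod (f x))\<^sup>2 + (cmod (g x))\<^sup>2)"
    using L2_integrable_square[OF f] L2_integrable_square[OF g] by simp
  show "(\<lambda>x. f x * cnj (g x)) \<in> borel_measurable lborel"
    using L2_measurable[OF f] L2_measurable[OF g] by measurable
  have "cmod (f x) * cmod (g x) \<le> (cmod (f x))\<^sup>2 + (cmod (g x))\<^sup>2" for x
    using sum_squares_bound[of "cmod (f x)" "cmod (g x)"]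
      mult_nonneg_nonneg[OF norm_ge_zero norm_ge_zero, of "f x" "g x"] by linarith
  then show "AE x in lborel. norm (f x * cnj (g x)) \<le> norm ((cmod (f x))\<^sup>2 + (cmod (g x))\<^sup>2)"
    by (intro AE_I2) (simp add: norm_mult)
qed

lemma L2_inner_diff_left:
  "f \<in> L2 \<Longrightarrow> g \<in> L2 \<Longrightarrow> e \<in> L2 \<Longrightarrow>
     L2_inner (\<lambda>x. f x - g x) e = L2_inner f e - L2_inner g e"
  unfolding L2_inner_def
  by (simp add: left_diff_distrib L2_integrable_inner)

lemma L2_norm_square: "(L2_norm f)\<^sup>2 = (LINT x|lborel. (cmod (f x))\<^sup>2)"
  by (simp add: L2_norm_def)

lemma L2_inner_eq_0_if_L2_norm_eq_0:
  assumes "L2_norm f = 0" and "f \<in> L2" and "g \<in> L2"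
  shows "L2_inner f g = 0"
proof -
  have "AE x in lborel. (cmod (f x))\<^sup>2 = 0"
    using assms L2_norm_square[of f] integral_nonneg_eq_0_iff_AE[OF L2_integrable_square[OF \<open>f \<in> L2\<close>]]
    by simp
  then have "AE x in lborel. f x * cnj (g x) = 0"
    by eventually_elim simp
  then show ?thesis
    unfolding L2_inner_def by (rule integral_eq_zero_AE)
qed

lemma L2_inner_cnj: "cnj (L2_inner f g) = L2_inner g f"
proof -
  have "(\<lambda>x. g x * cnj (f x)) = (\<lambda>x. cnj (f x * cnj (g x)))"
    by (simp add: mult.commute)
  then have "L2_inner g f = (LINT x|lborel. cnj (f x * cnj (g x)))"
    by (simp only: L2_inner_def)
  also have "\<dots> = cnj (L2_inner f g)"
    unfolding L2_inner_def by (rule Bochner_Integration.integral_cnj)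
  finally show ?thesis ..
qed

lemma L2_inner_le_weighted_norms:
  assumes f: "f \<in> L2" and g: "g \<in> L2" and t: "t > 0"
  shows "norm (L2_inner f g) \<le> (L2_norm f)\<^sup>2 / (2 * t) + t * (L2_norm g)\<^sup>2 / 2"
proof -
  have "norm (L2_inner f g) \<le> (LINT x|lborel. norm (f x * cnj (g x)))"
    unfolding L2_inner_def by (rule integral_norm_bound)
  also have "\<dots> \<le> (LINT x|lborel. (cmod (f x))\<^sup>2 / (2 * t) + t * (cmod (g x))\<^sup>2 / 2)"
  proof (rule integral_mono)
    show "integrable lborel (\<lambda>x. norm (f x * cnj (g x)))"
      by (rule integrable_norm[OF L2_integrable_inner[OF f g]])
    show "integrable lborel (\<lambda>x. (cmod (f x))\<^sup>2 / (2 * t) + t * (cmod (g x))\<^sup>2 / 2)"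
      using L2_integrable_square[OF f] L2_integrable_square[OF g] by auto
    fix x
    have "0 \<le> (cmod (f x) - t * cmod (g x))\<^sup>2 / (2 * t)"
      using t by simp
    also have "\<dots> = (cmod (f x))\<^sup>2 / (2 * t) + t * (cmod (g x))\<^sup>2 / 2 - cmod (f x) * cmod (g x)"
      using t by (simp add: field_simps power2_eq_square)
    finally show "norm (f x * cnj (g x)) \<le> (cmod (f x))\<^sup>2 / (2 * t) + t * (cmod (g x))\<^sup>2 / 2"
      by (simp add: norm_mult)
  qed
  also have "\<dots> = (L2_norm f)\<^sup>2 / (2 * t) + t * (L2_norm g)\<^sup>2 / 2"
    using L2_integrable_square[OF f] L2_integrable_square[OF g] by (simp add: L2_norm_square)
  finally show ?thesis .
qed

lemma L2_Cauchy_Schwarz: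
  assumes f: "f \<in> L2" and g: "g \<in> L2"
  shows "norm (L2_inner f g) \<le> L2_norm f * L2_norm g"
proof (cases "L2_norm f = 0 \<or> L2_norm g = 0")
  case True
  then have "L2_inner f g = 0 \<or> L2_inner g f = 0"
    using L2_inner_eq_0_if_L2_norm_eq_0[OF _ f g] L2_inner_eq_0_if_L2_norm_eq_0[OF _ g f] by auto
  then have "L2_inner f g = 0"
    using L2_inner_cnj[of g f] by auto
  then show ?thesis
    by (simp add: L2_norm_def)
next
  case False
  moreover have "L2_norm f \<ge> 0" "L2_norm g \<ge> 0"
    by (simp_all add: L2_norm_def integral_nonneg_AE)
  ultimately have "L2_norm f > 0" "L2_norm g > 0"
    by auto
  with L2_inner_le_weighted_norms[OF f g, of "L2_norm f / L2_norm g"] show ?thesis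
    by (simp add: field_simps power2_eq_square)
qed

lemma L2_inner_tendsto:
  assumes S: "\<And>N. S N \<in> L2" and F: "F \<in> L2" and e: "e \<in> L2"
    and conv: "(\<lambda>N. L2_norm (\<lambda>x. S N x - F x)) \<longlonglongrightarrow> 0"
  shows "(\<lambda>N. L2_inner (S N) e) \<longlonglongrightarrow> L2_inner F e"
proof -
  have bound: "norm (L2_inner (S N) e - L2_inner F e) \<le> L2_norm (\<lambda>x. S N x - F x) * L2_norm e" for N
    using L2_Cauchy_Schwarz[OF L2_diff[OF S F] e] L2_inner_diff_left[OF S F e] by simp
  have "(\<lambda>N. L2_inner (S N) e - L2_inner F e) \<longlonglongrightarrow> 0"
    using bound by (intro Lim_null_comparison[OF always_eventually tendsto_mult_left_zero[OF conv]]) auto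
  then show ?thesis
    by (simp add: LIM_zero_iff)
qed

section \<open>Polynomials times a Gaussian\<close>

definition gauss_poly :: "real \<Rightarrow> real poly \<Rightarrow> real \<Rightarrow> real" where
  "gauss_poly c P x = poly P x * exp (- c * x\<^sup>2)"

definition gauss_poly_deriv :: "real \<Rightarrow> real poly \<Rightarrow> real poly" where
  "gauss_poly_deriv c P = pderiv P - smult (2 * c) (pCons 0 P)"

lemma integrable_monom_gaussian:
  fixes c :: real
  assumes c: "c > 0"
  shows "integrable lborel (\<lambda>x. x ^ k * exp (- c * x\<^sup>2))"
proof -
  define s where "s = sqrt (1 / (2 * c))"
  have s: "s > 0" and s2: "2 * s\<^sup>2 = 1 / c"
    using c by (simp_all add: s_def)
  have moment: "integrable lborel (\<lambda>x. sqrt (2 * pi * s\<^sup>2) * (normal_density 0 s x * (x - 0) ^ k))"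
    using s by (intro integrable_mult_right integrable_normal_moment) auto
  have density: "sqrt (2 * pi * s\<^sup>2) * (normal_density 0 s x * (x - 0) ^ k) = x ^ k * exp (- c * x\<^sup>2)" for x
  proof -
    have "- x\<^sup>2 / (2 * s\<^sup>2) = - c * x\<^sup>2"
      by (simp add: s2)
    moreover have "sqrt (2 * pi * s\<^sup>2) > 0"
      using s by simp
    ultimately show ?thesis
      unfolding normal_density_def using s by (simp add: field_simps)
  qed
  show ?thesis
    using moment unfolding density .
qed

lemma gauss_poly_as_sum:
  "gauss_poly c Q x = (\<Sum>j\<le>degree Q. coeff Q j * (x ^ j * exp (- c * x\<^sup>2)))"
  by (simp add: gauss_poly_def poly_altdef sum_distrib_right sum_distrib_left mult_ac)

lemma integrable_gauss_poly: "c > 0 \<Longrightarrow> integrable lborel (gauss_poly c Q)"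
  unfolding gauss_poly_as_sum[abs_def]
  by (intro Bochner_Integration.integrable_sum integrable_mult_right integrable_monom_gaussian)

lemma monom_gaussian_tendsto_0_at_top:
  fixes c :: real
  assumes c: "c > 0"
  shows "((\<lambda>x. x ^ k * exp (- c * x\<^sup>2)) \<longlongrightarrow> 0) at_top"
proof -
  have "((\<lambda>x. x ^ k / exp x * exp (x - c * x\<^sup>2)) \<longlongrightarrow> 0 * 0) at_top"
    using c by (intro tendsto_mult tendsto_power_div_exp_0) real_asymp
  moreover have "x ^ k / exp x * exp (x - c * x\<^sup>2) = x ^ k * exp (- c * x\<^sup>2)" for x :: real
    by (simp add: exp_diff field_simps flip: exp_add)
  ultimately show ?thesis
    by simp
qed

lemma monom_gaussian_tendsto_0_at_bot:
  fixes c :: real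
  assumes c: "c > 0"
  shows "((\<lambda>x. x ^ k * exp (- c * x\<^sup>2)) \<longlongrightarrow> 0) at_bot"
proof -
  have "((\<lambda>x. (-1) ^ k * ((- x) ^ k * exp (- c * (- x)\<^sup>2))) \<longlongrightarrow> (-1) ^ k * 0) at_bot"
    by (intro tendsto_mult tendsto_const
        filterlim_compose[OF monom_gaussian_tendsto_0_at_top[OF c] filterlim_uminus_at_top_at_bot])
  moreover have "(-1) ^ k * ((- x) ^ k * exp (- c * (- x)\<^sup>2)) = x ^ k * exp (- c * x\<^sup>2)" for x :: real
    by (simp add: mult.assoc[symmetric] power_mult_distrib[symmetric])
  ultimately show ?thesis
    by (simp only: mult_zero_right)
qed

lemma gauss_poly_tendsto_0:
  assumes "c > 0"
  shows "(gauss_poly c Q \<longlongrightarrow> 0) at_top" and "(gauss_poly c Q \<longlongrightarrow> 0) at_bot"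
  unfolding gauss_poly_as_sum[abs_def]
  by (intro tendsto_null_sum tendsto_mult_right_zero monom_gaussian_tendsto_0_at_top[OF assms]
      monom_gaussian_tendsto_0_at_bot[OF assms])+

lemma gauss_poly_has_derivative:
  "(gauss_poly c R has_real_derivative gauss_poly c (gauss_poly_deriv c R) x) (at x)"
proof -
  have "(gauss_poly c R has_real_derivative
      poly (pderiv R) x * exp (- c * x\<^sup>2) + exp (- c * x\<^sup>2) * (- c * (2 * x)) * poly R x) (at x)"
    unfolding gauss_poly_def[abs_def]
    by (rule DERIV_mult[OF poly_DERIV]) (auto intro!: derivative_eq_intros)
  then show ?thesis
    by (simp add: gauss_poly_def gauss_poly_deriv_def algebra_simps)
qed

lemma continuous_on_gauss_poly: "continuous_on A (gauss_poly c R)"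
  unfolding gauss_poly_def[abs_def] by (intro continuous_intros)

lemma borel_measurable_gauss_poly [measurable]: "gauss_poly c R \<in> borel_measurable borel"
  by (rule borel_measurable_continuous_onI[OF continuous_on_gauss_poly])

lemma gauss_poly_L2:
  assumes c: "c > 0"
  shows "(\<lambda>x. a * complex_of_real (gauss_poly c R x)) \<in> L2"
proof -
  have "(cmod (a * complex_of_real (gauss_poly c R x)))\<^sup>2 = (cmod a)\<^sup>2 * gauss_poly (2 * c) (R * R) x" for x
  proof -
    have "exp (- (2 * c) * x\<^sup>2) = (exp (- c * x\<^sup>2))\<^sup>2"
      by (simp add: power2_eq_square exp_add[symmetric])
    then show ?thesis
      by (simp add: gauss_poly_def norm_mult power_mult_distrib abs_mult power2_eq_square)
  qed
  moreover have "integrable lborel (\<lambda>x. (cmod a)\<^sup>2 * gauss_poly (2 * c) (R * R) x)"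
    using c by (intro integrable_mult_right integrable_gauss_poly) simp
  ultimately show ?thesis
    unfolding L2_def by simp
qed

section \<open>Hermite polynomials\<close>

fun hermite_poly :: "nat \<Rightarrow> real poly" where
  "hermite_poly 0 = 1"
| "hermite_poly (Suc 0) = [:0, 2:]"
| "hermite_poly (Suc (Suc n)) = [:0, 2:] * hermite_poly (Suc n) - smult (2 * real (Suc n)) (hermite_poly n)"

lemma poly_hermite_poly: "poly (hermite_poly n) y = hermite n y"
  by (induction n rule: hermite_poly.induct) (auto simp: algebra_simps)

lemma hermite_minus: "hermite n (- y) = (-1) ^ n * hermite n y"
  by (induction n rule: hermite_poly.induct) (auto simp: algebra_simps)

lemma hermite_Suc: "hermite (Suc m) y = 2 * y * hermite m y - 2 * real m * hermite (m - 1) y"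
  by (cases m) auto

lemma coeff_hermite_poly: "coeff (hermite_poly n) n = 2 ^ n" "j > n \<Longrightarrow> coeff (hermite_poly n) j = 0"
proof -
  have "coeff (hermite_poly n) n = 2 ^ n \<and> (\<forall>j>n. coeff (hermite_poly n) j = 0)"
  proof (induction n rule: hermite_poly.induct)
    case (3 n)
    have "[:0, 2:] * p = pCons 0 (smult 2 p)" for p :: "real poly"
      by simp
    with 3 show ?case
      by (auto simp: coeff_pCons split: nat.splits)
  qed (auto simp: coeff_pCons split: nat.splits)
  then show "coeff (hermite_poly n) n = 2 ^ n" "j > n \<Longrightarrow> coeff (hermite_poly n) j = 0"
    by auto
qed

lemma degree_hermite_poly: "degree (hermite_poly n) = n"
  using coeff_hermite_poly[of n] by (intro antisym degree_le le_degree) auto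

lemma pderiv_hermite_poly: "pderiv (hermite_poly n) = smult (2 * real n) (hermite_poly (n - 1))"
proof (induction n rule: hermite_poly.induct)
  case (3 n)
  show ?case
  proof (cases n)
    case 0
    then show ?thesis
      by (simp add: pderiv_pCons pderiv_mult)
  next
    case (Suc k)
    have "pderiv (hermite_poly (Suc (Suc n))) = smult 2 (hermite_poly (Suc n))
        + [:0, 2:] * smult (2 * real (Suc n)) (hermite_poly n)
        - smult (2 * real (Suc n)) (smult (2 * real n) (hermite_poly k))"
      using 3 Suc by (subst hermite_poly.simps(3))
        (simp del: hermite_poly.simps add: pderiv_diff pderiv_pCons pderiv_smult algebra_simps)
    also have "\<dots> = smult 2 (hermite_poly (Suc n)) + smult (2 * real (Suc n))
        ([:0, 2:] * hermite_poly (Suc k) - smult (2 * real (Suc k)) (hermite_poly k))"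
      using Suc by (simp del: hermite_poly.simps add: algebra_simps smult_diff_right)
    also have "\<dots> = smult 2 (hermite_poly (Suc n)) + smult (2 * real (Suc n)) (hermite_poly (Suc n))"
      using Suc by simp
    also have "\<dots> = smult (2 * real (Suc (Suc n))) (hermite_poly (Suc n))"
      using Suc by (simp del: hermite_poly.simps add: algebra_simps smult_add_left[symmetric])
    finally show ?thesis
      by simp
  qed
qed (simp_all add: pderiv_pCons)

definition scaled_hermite_poly :: "real \<Rightarrow> nat \<Rightarrow> real poly" where
  "scaled_hermite_poly s n = pcompose (hermite_poly n) [:0, 1 / s:]"

lemma poly_scaled_hermite_poly: "poly (scaled_hermite_poly s n) x = hermite n (x / s)"
  by (simp add: scaled_hermite_poly_def poly_pcompose poly_hermite_poly)

lemma degree_scaled_hermite_poly: "s > 0 \<Longrightarrow> degree (scaled_hermite_poly s n) = n"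
  by (simp add: scaled_hermite_poly_def degree_pcompose degree_hermite_poly)

lemma scaled_hermite_poly_nonzero: "s > 0 \<Longrightarrow> scaled_hermite_poly s n \<noteq> 0"
  using coeff_hermite_poly(1)[of n]
  by (auto simp: scaled_hermite_poly_def pcompose_eq_0_iff degree_hermite_poly)

lemma gauss_poly_deriv_scaled_hermite_poly:
  assumes "s > 0"
  shows "gauss_poly_deriv (1 / s\<^sup>2) (scaled_hermite_poly s m) = smult (- 1 / s) (scaled_hermite_poly s (Suc m))"
proof (rule poly_ext)
  fix x
  have "poly (pderiv (scaled_hermite_poly s m)) x = 2 * real m * hermite (m - 1) (x / s) / s"
    by (simp add: scaled_hermite_poly_def pderiv_pcompose poly_pcompose pderiv_hermite_poly
        pderiv_pCons poly_hermite_poly)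
  then show "poly (gauss_poly_deriv (1 / s\<^sup>2) (scaled_hermite_poly s m)) x
      = poly (smult (- 1 / s) (scaled_hermite_poly s (Suc m))) x"
    using assms
    by (simp add: gauss_poly_deriv_def poly_scaled_hermite_poly hermite_Suc field_simps power2_eq_square)
qed

lemma gauss_poly_deriv_mult:
  "gauss_poly_deriv c (P * R) = pderiv P * R + P * gauss_poly_deriv c R"
  by (simp add: gauss_poly_deriv_def pderiv_mult algebra_simps)

lemma integral_gauss_poly_deriv:
  assumes "c > 0"
  shows "integral\<^sup>L lborel (gauss_poly c (gauss_poly_deriv c R)) = 0"
  using assms
  by (intro integral_derivative_eq_0[OF gauss_poly_has_derivative continuous_on_gauss_poly
        integrable_gauss_poly gauss_poly_tendsto_0])

definition hermite_moment :: "real \<Rightarrow> nat \<Rightarrow> real poly \<Rightarrow> real" where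
  "hermite_moment s n P = integral\<^sup>L lborel (gauss_poly (1 / s\<^sup>2) (P * scaled_hermite_poly s n))"

lemma hermite_moment_0 [simp]: "hermite_moment s n 0 = 0"
  by (simp add: hermite_moment_def gauss_poly_def[abs_def])

lemma hermite_moment_diff:
  assumes "s > 0"
  shows "hermite_moment s n (P - smult a Q) = hermite_moment s n P - a * hermite_moment s n Q"
proof -
  let ?H = "scaled_hermite_poly s n"
  have "gauss_poly (1 / s\<^sup>2) ((P - smult a Q) * ?H)
      = (\<lambda>x. gauss_poly (1 / s\<^sup>2) (P * ?H) x - a * gauss_poly (1 / s\<^sup>2) (Q * ?H) x)"
    by (simp add: fun_eq_iff gauss_poly_def algebra_simps)
  then show ?thesis
    using assms by (simp add: hermite_moment_def integrable_gauss_poly)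
qed

lemma hermite_moment_Suc:
  assumes s: "s > 0"
  shows "hermite_moment s (Suc m) P = s * hermite_moment s m (pderiv P)"
proof -
  let ?c = "1 / s\<^sup>2"
  have "gauss_poly ?c (gauss_poly_deriv ?c (P * scaled_hermite_poly s m))
      = (\<lambda>x. gauss_poly ?c (pderiv P * scaled_hermite_poly s m) x
        - (1 / s) * gauss_poly ?c (P * scaled_hermite_poly s (Suc m)) x)"
    using s by (simp add: fun_eq_iff gauss_poly_deriv_mult gauss_poly_deriv_scaled_hermite_poly gauss_poly_def
        algebra_simps)
  then have "0 = hermite_moment s m (pderiv P) - (1 / s) * hermite_moment s (Suc m) P"
    using integral_gauss_poly_deriv[of ?c "P * scaled_hermite_poly s m"] s
    by (simp add: hermite_moment_def integrable_gauss_poly)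
  then show ?thesis
    using s by (simp add: field_simps)
qed

lemma hermite_moment_eq_0:
  assumes "s > 0" and "degree P < n"
  shows "hermite_moment s n P = 0"
  using assms(2)
proof (induction n arbitrary: P)
  case (Suc m)
  show ?case
  proof (cases "m = 0")
    case True
    with Suc.prems have "pderiv P = 0"
      by (simp add: pderiv_eq_0_iff)
    then show ?thesis
      using assms(1) by (simp add: hermite_moment_Suc)
  next
    case False
    with Suc.prems have "degree (pderiv P) < m"
      by (simp add: degree_pderiv)
    then show ?thesis
      using assms(1) by (simp add: hermite_moment_Suc Suc.IH)
  qed
qed simp

lemma hermite_moment_diff_lower_degree:
  assumes "s > 0" and "D = 0 \<or> degree D < n"
  shows "hermite_moment s n (D - smult a P) = - a * hermite_moment s n P"
  using assms hermite_moment_eq_0[OF assms(1)] by (auto simp: hermite_moment_diff)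

lemma hermite_moment_self_pos:
  assumes s: "s > 0"
  shows "hermite_moment s n (scaled_hermite_poly s n) > 0"
proof -
  let ?H = "scaled_hermite_poly s n"
  obtain x0 where "poly ?H x0 \<noteq> 0"
    using scaled_hermite_poly_nonzero[OF s] poly_all_0_iff_0 by blast
  then show ?thesis
    unfolding hermite_moment_def using s
    by (intro integral_pos_if_continuous[where a = x0] continuous_on_gauss_poly integrable_gauss_poly)
       (auto simp: gauss_poly_def simp flip: power2_eq_square)
qed

section \<open>Parity of polynomials and the polynomial parts of \<open>t\<close> and \<open>t\<^sup>*\<close>\<close>

definition poly_parity :: "real poly \<Rightarrow> real \<Rightarrow> bool" where
  "poly_parity P z \<longleftrightarrow> (\<forall>x. poly P (- x) = z * poly P x)"

lemma poly_parity_scaled_hermite_poly: "poly_parity (scaled_hermite_poly s n) ((-1) ^ n)"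
  by (simp add: poly_parity_def poly_scaled_hermite_poly hermite_minus flip: minus_divide_left)

lemma poly_parity_diff_smult: "poly_parity P z \<Longrightarrow> poly_parity Q z \<Longrightarrow> poly_parity (P - smult a Q) z"
  by (simp add: poly_parity_def algebra_simps)

lemma poly_parity_pderiv:
  assumes "poly_parity P z"
  shows "poly_parity (pderiv P) (- z)"
  unfolding poly_parity_def
proof
  fix x
  have "((\<lambda>x. poly P (- x)) has_real_derivative poly (pderiv P) (- x) * (-1)) (at x)"
    by (rule DERIV_chain2[OF poly_DERIV]) (auto intro!: derivative_eq_intros)
  moreover have "(\<lambda>x. poly P (- x)) = (\<lambda>x. z * poly P x)"
    using assms by (auto simp: poly_parity_def)
  ultimately have "((\<lambda>x. z * poly P x) has_real_derivative - poly (pderiv P) (- x)) (at x)"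
    by simp
  from DERIV_unique[OF this DERIV_cmult[OF poly_DERIV]]
  show "poly (pderiv P) (- x) = - z * poly (pderiv P) x"
    by simp
qed

lemma pCons_synthetic_div_0: "poly P 0 = 0 \<Longrightarrow> pCons 0 (synthetic_div P 0) = P"
  using synthetic_div_correct[of P 0] by simp

lemma poly_synthetic_div_0: "poly P 0 = 0 \<Longrightarrow> poly P x = x * poly (synthetic_div P 0) x"
  by (subst pCons_synthetic_div_0[symmetric]) simp_all

lemma poly_parity_odd_0: "poly_parity P (-1) \<Longrightarrow> poly P 0 = 0"
  unfolding poly_parity_def by (metis add.inverse_neutral equal_neg_zero mult_minus1)

lemma poly_parity_synthetic_div_0:
  assumes "poly_parity P (-1)"
  shows "poly_parity (synthetic_div P 0) 1"
  unfolding poly_parity_def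
proof
  fix x
  show "poly (synthetic_div P 0) (- x) = 1 * poly (synthetic_div P 0) x"
  proof (cases "x = 0")
    case False
    have "- x * poly (synthetic_div P 0) (- x) = - (x * poly (synthetic_div P 0) x)"
      using assms poly_synthetic_div_0[OF poly_parity_odd_0[OF assms]] by (simp add: poly_parity_def)
    with False show ?thesis
      by simp
  qed simp
qed

text \<open>On Gaussian-weighted polynomials \<open>t = q\<^sup>-\<^sup>1 p\<close> and \<open>t\<^sup>*\<close> (formally \<open>p q\<^sup>-\<^sup>1\<close>) act,
  up to the factor \<open>-\<i>\<close>, by the following maps on the polynomial part.\<close>
definition t_poly :: "real \<Rightarrow> real poly \<Rightarrow> real poly" where
  "t_poly c P = synthetic_div (pderiv P) 0 - smult (2 * c) P"

definition tadj_poly :: "real \<Rightarrow> real poly \<Rightarrow> real poly" where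
  "tadj_poly c Q = gauss_poly_deriv c (synthetic_div Q 0)"

lemma tadj_poly_eq:
  "poly Q 0 = 0 \<Longrightarrow> tadj_poly c Q = pderiv (synthetic_div Q 0) - smult (2 * c) Q"
  by (simp add: tadj_poly_def gauss_poly_deriv_def pCons_synthetic_div_0)

lemma degree_diff_smult_le:
  fixes D P :: "'a :: comm_ring poly"
  shows "degree D \<le> n \<Longrightarrow> degree P \<le> n \<Longrightarrow> degree (D - smult a P) \<le> n"
  by (intro degree_diff_le) (auto intro: order_trans[OF degree_smult_le])

lemma t_poly_invariant:
  assumes "poly_parity P 1" and "degree P \<le> n"
  shows "poly_parity (t_poly c P) 1" and "degree (t_poly c P) \<le> n"
proof -
  have "poly_parity (pderiv P) (-1)"
    using poly_parity_pderiv[OF assms(1)] by simp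
  then show "poly_parity (t_poly c P) 1"
    unfolding t_poly_def by (intro poly_parity_diff_smult poly_parity_synthetic_div_0 assms(1))
  show "degree (t_poly c P) \<le> n"
    unfolding t_poly_def using assms(2)
    by (intro degree_diff_smult_le) (simp_all add: degree_synthetic_div degree_pderiv)
qed

lemma tadj_poly_invariant:
  assumes "poly_parity Q (-1)" and "degree Q \<le> n"
  shows "poly_parity (tadj_poly c Q) (-1)" and "degree (tadj_poly c Q) \<le> n"
proof -
  have eq: "tadj_poly c Q = pderiv (synthetic_div Q 0) - smult (2 * c) Q"
    by (rule tadj_poly_eq[OF poly_parity_odd_0[OF assms(1)]])
  have "poly_parity (pderiv (synthetic_div Q 0)) (-1)"
    using poly_parity_pderiv[OF poly_parity_synthetic_div_0[OF assms(1)]] by simp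
  then show "poly_parity (tadj_poly c Q) (-1)"
    unfolding eq by (intro poly_parity_diff_smult assms(1))
  show "degree (tadj_poly c Q) \<le> n"
    unfolding eq using assms(2)
    by (intro degree_diff_smult_le) (simp_all add: degree_synthetic_div degree_pderiv)
qed

lemma hermite_moment_diff_lower_degree2:
  assumes "s > 0" and "degree P \<le> n" and "degree D \<le> degree P - 2"
    and "degree P = 0 \<Longrightarrow> D = 0"
  shows "hermite_moment s n (D - smult a P) = - a * hermite_moment s n P"
proof (rule hermite_moment_diff_lower_degree[OF assms(1)])
  show "D = 0 \<or> degree D < n"
    using assms(2-4) by (cases "degree P = 0") auto
qed

lemma hermite_moment_t_poly:
  assumes "s > 0" and "degree P \<le> n"
  shows "hermite_moment s n (t_poly c P) = - (2 * c) * hermite_moment s n P"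
  unfolding t_poly_def using assms
  by (intro hermite_moment_diff_lower_degree2)
     (auto simp: degree_synthetic_div degree_pderiv pderiv_eq_0_iff synthetic_div_eq_0_iff)

lemma hermite_moment_tadj_poly:
  assumes "s > 0" and "degree Q \<le> n" and "poly Q 0 = 0"
  shows "hermite_moment s n (tadj_poly c Q) = - (2 * c) * hermite_moment s n Q"
  unfolding tadj_poly_eq[OF assms(3)] using assms(1,2)
  by (intro hermite_moment_diff_lower_degree2)
     (auto simp: degree_synthetic_div degree_pderiv pderiv_eq_0_iff synthetic_div_eq_0_iff)

section \<open>Identifying weak derivatives\<close>

lemma integral_weighted_tendsto:
  fixes r :: "real \<Rightarrow> complex"
  assumes loc: "set_integrable lborel {-K..K} r"
    and meas: "\<And>m. \<phi> m \<in> borel_measurable borel" "\<psi> \<in> borel_measurable borel"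
    and bound: "\<And>m x. \<bar>\<phi> m x\<bar> \<le> indicator {-K..K} x"
    and conv: "\<And>x. (\<lambda>m. \<phi> m x) \<longlonglongrightarrow> \<psi> x"
  shows "(\<lambda>m. integral\<^sup>L lborel (\<lambda>x. \<phi> m x *\<^sub>R r x)) \<longlonglongrightarrow> integral\<^sup>L lborel (\<lambda>x. \<psi> x *\<^sub>R r x)"
proof (rule integral_dominated_convergence[where w = "\<lambda>x. indicator {-K..K} x * cmod (r x)"])
  let ?r = "\<lambda>x. indicator {-K..K} x *\<^sub>R r x"
  have ir: "integrable lborel ?r"
    using loc by (simp add: set_integrable_def)
  then show "integrable lborel (\<lambda>x. indicator {-K..K} x * cmod (r x))"
    using integrable_norm[OF ir] by (simp add: indicator_def if_distrib cong: if_cong)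
  have bound': "\<bar>\<psi> x\<bar> \<le> indicator {-K..K} x" for x
    using bound by (intro tendsto_le[OF _ tendsto_const tendsto_rabs[OF conv[of x]]]) auto
  have eqs: "(\<lambda>x. \<phi> m x *\<^sub>R r x) = (\<lambda>x. \<phi> m x *\<^sub>R ?r x)"
    "(\<lambda>x. \<psi> x *\<^sub>R r x) = (\<lambda>x. \<psi> x *\<^sub>R ?r x)" for m
  proof -
    have "x \<notin> {-K..K} \<Longrightarrow> \<phi> m x = 0 \<and> \<psi> x = 0" for x
      using bound[of m x] bound'[of x] by simp
    then show "(\<lambda>x. \<phi> m x *\<^sub>R r x) = (\<lambda>x. \<phi> m x *\<^sub>R ?r x)"
      "(\<lambda>x. \<psi> x *\<^sub>R r x) = (\<lambda>x. \<psi> x *\<^sub>R ?r x)"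
      by (auto simp: fun_eq_iff indicator_def)
  qed
  have rm: "?r \<in> borel_measurable borel"
    using ir by auto
  show "(\<lambda>x. \<psi> x *\<^sub>R r x) \<in> borel_measurable lborel"
    unfolding eqs using borel_measurable_scaleR[OF meas(2) rm] by simp
  show "(\<lambda>x. \<phi> m x *\<^sub>R r x) \<in> borel_measurable lborel" for m
    unfolding eqs using borel_measurable_scaleR[OF meas(1) rm] by simp
  show "AE x in lborel. (\<lambda>m. \<phi> m x *\<^sub>R r x) \<longlonglongrightarrow> \<psi> x *\<^sub>R r x"
    by (intro AE_I2 tendsto_scaleR conv tendsto_const)
  show "AE x in lborel. norm (\<phi> m x *\<^sub>R r x) \<le> indicator {-K..K} x * cmod (r x)" for m
    using bound[of m] by (intro AE_I2) (simp add: mult_right_mono)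
qed

lemma indicator_Icc_tendsto:
  fixes A B :: "nat \<Rightarrow> real"
  assumes "A \<longlonglongrightarrow> a" "B \<longlonglongrightarrow> b" "\<And>m. A m \<le> a" "\<And>m. b \<le> B m"
  shows "(\<lambda>m. indicator {A m..B m} x :: real) \<longlonglongrightarrow> indicator {a..b} x"
proof -
  consider "x < a" | "b < x" | "a \<le> x \<and> x \<le> b"
    by linarith
  then have "eventually (\<lambda>m. indicator {A m..B m} x = (indicator {a..b} x :: real)) sequentially"
  proof cases
    case 1
    show ?thesis
      using order_tendstoD(1)[OF assms(1) 1] by (rule eventually_mono) (use 1 in \<open>auto simp: indicator_def\<close>)
  next
    case 2
    show ?thesis
      using order_tendstoD(2)[OF assms(2) 2] by (rule eventually_mono) (use 2 in \<open>auto simp: indicator_def\<close>)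
  next
    case 3
    then show ?thesis
      using assms(3,4) by (intro always_eventually) (auto simp: indicator_def intro: order_trans)
  qed
  then show ?thesis
    by (rule tendsto_eventually)
qed

lemma AE_obtain_approximations:
  fixes a b :: real
  assumes E: "AE x in lborel. x \<in> E"
  obtains A B where "\<And>m. A m \<in> E" "\<And>m. B m \<in> E" "\<And>m. A m < a" "\<And>m. b < B m"
    "A \<longlonglongrightarrow> a" "B \<longlonglongrightarrow> b"
proof -
  have "\<forall>m::nat. \<exists>y\<in>E. a - inverse (real (Suc m)) < y \<and> y < a"
    "\<forall>m::nat. \<exists>y\<in>E. b < y \<and> y < b + inverse (real (Suc m))"
    using AE_exists_between[OF E] by (simp_all add: add_pos_pos)
  then obtain A B where A: "\<And>m. A m \<in> E \<and> a - inverse (real (Suc m)) < A m \<and> A m < a"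
    and B: "\<And>m. B m \<in> E \<and> b < B m \<and> B m < b + inverse (real (Suc m))"
    by metis
  have lower: "(\<lambda>m. a - inverse (real (Suc m))) \<longlonglongrightarrow> a"
    using tendsto_diff[OF tendsto_const LIMSEQ_inverse_real_of_nat, of a] by simp
  have upper: "(\<lambda>m. b + inverse (real (Suc m))) \<longlonglongrightarrow> b"
    using tendsto_add[OF tendsto_const LIMSEQ_inverse_real_of_nat, of b] by simp
  have "A \<longlonglongrightarrow> a"
    by (rule tendsto_sandwich[OF _ _ lower tendsto_const])
       (use A in \<open>intro always_eventually allI; meson less_imp_le\<close>)+
  moreover have "B \<longlonglongrightarrow> b"
    by (rule tendsto_sandwich[OF _ _ tendsto_const upper])
       (use B in \<open>intro always_eventually allI; meson less_imp_le\<close>)+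
  ultimately show ?thesis
    using A B that by blast
qed

lemma set_integral_Icc_eq_0_if_dense:
  fixes r :: "real \<Rightarrow> complex"
  assumes loc: "\<And>a b. set_integrable lborel {a..b} r"
    and E: "AE x in lborel. x \<in> E"
    and zero: "\<And>a b. a \<in> E \<Longrightarrow> b \<in> E \<Longrightarrow> a < b \<Longrightarrow> (LINT x:{a..b}|lborel. r x) = 0"
  shows "(LINT x:{a..b}|lborel. r x) = 0"
proof (cases "a \<le> b")
  case True
  obtain A B where AB: "\<And>m. A m \<in> E" "\<And>m. B m \<in> E" "\<And>m. A m < a" "\<And>m. b < B m"
    and "A \<longlonglongrightarrow> a" "B \<longlonglongrightarrow> b"
    using AE_obtain_approximations[OF E, of a b] by blast
  have "bounded (range A)" "bounded (range B)"
    using \<open>A \<longlonglongrightarrow> a\<close> \<open>B \<longlonglongrightarrow> b\<close> by (auto intro: convergent_imp_bounded)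
  then obtain K where K: "\<And>m. \<bar>A m\<bar> \<le> K \<and> \<bar>B m\<bar> \<le> K"
    unfolding bounded_iff by (metis UNIV_I image_eqI max.cobounded1 max.cobounded2 order_trans real_norm_def)
  have "(\<lambda>m. integral\<^sup>L lborel (\<lambda>x. indicator {A m..B m} x *\<^sub>R r x))
      \<longlonglongrightarrow> integral\<^sup>L lborel (\<lambda>x. indicator {a..b} x *\<^sub>R r x)"
  proof (rule integral_weighted_tendsto[where K = K])
    show "\<bar>indicat_real {A m..B m} x\<bar> \<le> indicat_real {- K..K} x" for m x
      using K[of m] by (auto simp: indicator_def abs_le_iff)
    show "(\<lambda>m. indicat_real {A m..B m} x) \<longlonglongrightarrow> indicat_real {a..b} x" for x
      using AB by (intro indicator_Icc_tendsto \<open>A \<longlonglongrightarrow> a\<close> \<open>B \<longlonglongrightarrow> b\<close> less_imp_le)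
  qed (use loc in auto)
  moreover have "integral\<^sup>L lborel (\<lambda>x. indicator {A m..B m} x *\<^sub>R r x) = 0" for m
    using zero[of "A m" "B m"] AB[of m] True by (simp add: set_lebesgue_integral_def)
  ultimately show ?thesis
    by (simp add: set_lebesgue_integral_def LIMSEQ_const_iff)
qed (simp add: set_lebesgue_integral_def)

lemma AE_eq_0_if_integrable_set_integrals_Icc_eq_0:
  fixes g :: "real \<Rightarrow> complex"
  assumes g: "integrable lborel g" and total: "integral\<^sup>L lborel g = 0"
    and zero: "\<And>a b. (LINT x:{a..b}|lborel. g x) = 0"
  shows "AE x in lborel. g x = 0"
proof (rule sigma_finite_measure.density_zero[OF sigma_finite_lborel g])
  fix A :: "real set"
  assume "A \<in> sets lborel"
  then have "A \<in> sets borel"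
    by simp
  then show "(LINT x:A|lborel. g x) = 0"
  proof (induction rule: borel_set_induct)
    case (compl A)
    have "integrable lborel (\<lambda>x. indicator A x *\<^sub>R g x)"
      by (rule integrable_mult_indicator[OF _ g]) (use compl(1) in simp)
    moreover have "(\<lambda>x. indicator (-A) x *\<^sub>R g x) = (\<lambda>x. g x - indicator A x *\<^sub>R g x)"
      by (auto simp: indicator_def fun_eq_iff)
    ultimately show ?case
      using compl(2) g total by (simp add: set_lebesgue_integral_def Bochner_Integration.integral_diff)
  next
    case (union F)
    have "(LINT x:(\<Union>i. F i)|lborel. g x) = (\<Sum>i. (LINT x:(F i)|lborel. g x))"
      using union(1,2) integrable_mult_indicator[OF _ g]
      by (intro lebesgue_integral_countable_add) (auto simp: disjoint_family_on_def set_integrable_def)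
    then show ?case
      using union(3) by simp
  qed (use zero in \<open>simp_all add: set_lebesgue_integral_def\<close>)
qed

lemma AE_eq_0_if_set_integrals_Icc_eq_0:
  fixes r :: "real \<Rightarrow> complex"
  assumes loc: "\<And>a b. set_integrable lborel {a..b} r"
    and zero: "\<And>a b. (LINT x:{a..b}|lborel. r x) = 0"
  shows "AE x in lborel. r x = 0"
proof -
  have "AE x in lborel. indicator {- real M..real M} x *\<^sub>R r x = 0" for M :: nat
  proof (rule AE_eq_0_if_integrable_set_integrals_Icc_eq_0)
    show "integrable lborel (\<lambda>x. indicator {- real M..real M} x *\<^sub>R r x)"
      using loc by (simp add: set_integrable_def)
    show "integral\<^sup>L lborel (\<lambda>x. indicator {- real M..real M} x *\<^sub>R r x) = 0"
      using zero by (simp add: set_lebesgue_integral_def)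
    fix a b
    have "(\<lambda>x. indicator {a..b} x *\<^sub>R indicator {- real M..real M} x *\<^sub>R r x)
        = (\<lambda>x. indicator {max a (- real M)..min b (real M)} x *\<^sub>R r x)"
      by (auto simp: indicator_def fun_eq_iff)
    then show "(LINT x:{a..b}|lborel. indicator {- real M..real M} x *\<^sub>R r x) = 0"
      using zero[of "max a (- real M)" "min b (real M)"] by (simp add: set_lebesgue_integral_def)
  qed
  then have "AE x in lborel. \<forall>M::nat. indicator {- real M..real M} x *\<^sub>R r x = 0"
    by (simp only: AE_all_countable) blast
  then show ?thesis
  proof eventually_elim
    case (elim x)
    obtain M :: nat where "\<bar>x\<bar> \<le> real M"
      using real_arch_simple by blast
    with elim[rule_format, of M] show ?case
      by (simp add: indicator_def split: if_splits)
  qed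
qed

lemma set_integrable_Icc_imp_interval:
  fixes k :: "real \<Rightarrow> 'a::{banach, second_countable_topology}"
  assumes "\<And>a b. set_integrable lborel {a..b} k"
  shows "interval_lebesgue_integrable lborel (ereal u) (ereal v) k"
  using set_integrable_subset[OF assms[of u v], of "{u<..<v}"] set_integrable_subset[OF assms[of v u], of "{v<..<u}"]
  by (auto simp: interval_lebesgue_integrable_def subset_eq)

lemma AE_eq_derivative_if_antiderivative:
  fixes k \<phi> \<phi>' :: "real \<Rightarrow> complex"
  assumes kloc: "\<And>a b. set_integrable lborel {a..b} k"
    and anti: "AE x in lborel. \<phi> x = c + (LBINT s=ereal 0..ereal x. k s)"
    and deriv: "\<And>x. (\<phi> has_vector_derivative \<phi>' x) (at x)"
    and cont: "continuous_on UNIV \<phi>'"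
  shows "AE x in lborel. k x = \<phi>' x"
proof -
  have \<phi>'loc: "set_integrable lborel {a..b} \<phi>'" for a b
    by (rule borel_integrable_atLeastAtMost') (rule continuous_on_subset[OF cont], auto)
  define E where "E = {x. \<phi> x = c + (LBINT s=ereal 0..ereal x. k s)}"
  have "AE x in lborel. k x - \<phi>' x = 0"
  proof (rule AE_eq_0_if_set_integrals_Icc_eq_0)
    show loc: "set_integrable lborel {a..b} (\<lambda>x. k x - \<phi>' x)" for a b
      by (rule set_integral_diff(1)[OF kloc \<phi>'loc])
    show "(LINT x:{a..b}|lborel. k x - \<phi>' x) = 0" for a b
    proof (rule set_integral_Icc_eq_0_if_dense[where E = E, OF loc])
      show "AE x in lborel. x \<in> E"
        using anti unfolding E_def by simp
      fix a b assume "a \<in> E" "b \<in> E" "a < b"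
      have "(LBINT s=ereal 0..ereal a. k s) + (LBINT s=ereal a..ereal b. k s) = (LBINT s=ereal 0..ereal b. k s)"
        using set_integrable_Icc_imp_interval[OF kloc]
        by (intro interval_integral_sum) (simp flip: ereal_min ereal_max)
      with \<open>a \<in> E\<close> \<open>b \<in> E\<close> have "(LBINT s=ereal a..ereal b. k s) = \<phi> b - \<phi> a"
        unfolding E_def by (simp add: algebra_simps)
      moreover have "(LBINT s=ereal a..ereal b. \<phi>' s) = \<phi> b - \<phi> a"
        using deriv by (intro interval_integral_FTC_finite continuous_on_subset[OF cont])
          (auto intro: has_vector_derivative_at_within)
      ultimately show "(LINT x:{a..b}|lborel. k x - \<phi>' x) = 0"
        using \<open>a < b\<close> by (simp add: set_integral_diff(2)[OF kloc \<phi>'loc] interval_integral_Icc)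
    qed
  qed
  then show ?thesis
    by simp
qed

lemma p_rel_derivative:
  fixes \<phi> \<phi>' :: "real \<Rightarrow> complex"
  assumes p: "p_rel f h"
    and f: "AE x in lborel. f x = \<phi> x"
    and deriv: "\<And>x. (\<phi> has_vector_derivative \<phi>' x) (at x)"
    and cont: "continuous_on UNIV \<phi>'"
  shows "AE x in lborel. h x = - \<i> * \<phi>' x"
proof -
  from p obtain c where "h \<in> L2" and
    c: "AE x in lborel. f x = c + interval_lebesgue_integral lborel (ereal 0) (ereal x) (\<lambda>s. \<i> * h s)"
    unfolding p_rel_def by blast
  have "AE x in lborel. \<i> * h x = \<phi>' x"
  proof (rule AE_eq_derivative_if_antiderivative[OF _ _ deriv cont])
    show "set_integrable lborel {a..b} (\<lambda>x. \<i> * h x)" for a b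
      using L2_set_integrable_Icc[OF \<open>h \<in> L2\<close>] by (rule set_integrable_mult_right)
    show "AE x in lborel. \<phi> x = c + (LBINT s=ereal 0..ereal x. \<i> * h s)"
      using c f by eventually_elim simp
  qed
  then show ?thesis
  proof eventually_elim
    case (elim x)
    then have "- \<i> * (\<i> * h x) = - \<i> * \<phi>' x"
      by simp
    then show ?case
      by (simp add: mult.assoc[symmetric])
  qed
qed

section \<open>Trapezoidal test functions\<close>

definition trapezoid :: "real \<Rightarrow> real \<Rightarrow> real \<Rightarrow> real \<Rightarrow> real" where
  "trapezoid a b d x = max 0 (min 1 (min ((x - (a - d)) / d) ((b + d - x) / d)))"

definition trapezoid_deriv :: "real \<Rightarrow> real \<Rightarrow> real \<Rightarrow> real \<Rightarrow> real" where
  "trapezoid_deriv a b d x =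
     (if a - d < x \<and> x < a then 1 / d else if b < x \<and> x < b + d then - 1 / d else 0)"

lemma continuous_on_trapezoid: "continuous_on A (trapezoid a b d)"
  unfolding trapezoid_def[abs_def] divide_inverse by (intro continuous_intros)

lemma borel_measurable_trapezoid [measurable]: "trapezoid a b d \<in> borel_measurable borel"
  by (rule borel_measurable_continuous_onI[OF continuous_on_trapezoid])

lemma borel_measurable_trapezoid_deriv [measurable]: "trapezoid_deriv a b d \<in> borel_measurable borel"
  unfolding trapezoid_deriv_def[abs_def] by measurable

lemma trapezoid_bounds: "0 \<le> trapezoid a b d x" "trapezoid a b d x \<le> 1"
  unfolding trapezoid_def by auto

lemma trapezoid_outside:
  assumes "d > 0" and "x \<notin> {a - d..b + d}"
  shows "trapezoid a b d x = 0"
proof -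
  have "(x - (a - d)) / d < 0 \<or> (b + d - x) / d < 0"
    using assms by (auto simp: divide_less_0_iff)
  then show ?thesis
    unfolding trapezoid_def by auto
qed

lemma trapezoid_deriv_outside:
  "d > 0 \<Longrightarrow> a < b \<Longrightarrow> x \<notin> {a - d..b + d} \<Longrightarrow> trapezoid_deriv a b d x = 0"
  unfolding trapezoid_deriv_def by auto

lemma trapezoid_deriv_bound: "d > 0 \<Longrightarrow> \<bar>trapezoid_deriv a b d x\<bar> \<le> 1 / d"
  unfolding trapezoid_deriv_def by auto

lemma trapezoid_inside:
  assumes "d > 0" and "a \<le> x" "x \<le> b"
  shows "trapezoid a b d x = 1"
proof -
  have "1 \<le> (x - (a - d)) / d" "1 \<le> (b + d - x) / d"
    using assms by (auto simp: field_simps)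
  then show ?thesis
    unfolding trapezoid_def by auto
qed

lemma trapezoid_left_ramp:
  assumes "d > 0" and "a < b" and "y \<in> {a - d<..<a}"
  shows "trapezoid a b d y = (y - (a - d)) / d"
proof -
  have "(y - (a - d)) / d \<le> (b + d - y) / d"
    using assms by (intro divide_right_mono) auto
  moreover have "(y - (a - d)) / d \<le> 1" "0 \<le> (y - (a - d)) / d"
    using assms by (auto simp: field_simps)
  ultimately show ?thesis
    unfolding trapezoid_def by (simp add: min_absorb1 min_absorb2 max_absorb2)
qed

lemma trapezoid_right_ramp:
  assumes "d > 0" and "a < b" and "y \<in> {b<..<b + d}"
  shows "trapezoid a b d y = (b + d - y) / d"
proof -
  have "(b + d - y) / d \<le> (y - (a - d)) / d"
    using assms by (intro divide_right_mono) auto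
  moreover have "(b + d - y) / d \<le> 1" "0 \<le> (b + d - y) / d"
    using assms by (auto simp: field_simps)
  ultimately show ?thesis
    unfolding trapezoid_def by (simp add: min_absorb1 min_absorb2 max_absorb2)
qed

lemma trapezoid_has_derivative:
  assumes d: "d > 0" and ab: "a < b" and x: "x \<notin> {a - d, a, b, b + d}"
  shows "(trapezoid a b d has_real_derivative trapezoid_deriv a b d x) (at x)"
proof -
  have piece: "(trapezoid a b d has_real_derivative trapezoid_deriv a b d x) (at x)"
    if "open S" "x \<in> S" "\<And>y. y \<in> S \<Longrightarrow> g y = trapezoid a b d y"
      "(g has_real_derivative trapezoid_deriv a b d x) (at x)" for S g
    using has_field_derivative_transform_within_open[OF that(4,1,2,3)] .
  consider "x < a - d" | "a - d < x" "x < a" | "a < x" "x < b" | "b < x" "x < b + d" | "b + d < x"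
    using x by fastforce
  then show ?thesis
  proof cases
    case 1
    with d ab show ?thesis
      by (intro piece[of "{..<a - d}" "\<lambda>_. 0"] trapezoid_outside[symmetric])
         (auto simp: trapezoid_deriv_def)
  next
    case 2
    show ?thesis
    proof (rule piece[of "{a - d<..<a}" "\<lambda>y. (y - (a - d)) / d"])
      show "((\<lambda>y. (y - (a - d)) / d) has_real_derivative trapezoid_deriv a b d x) (at x)"
        using 2 d by (auto simp: trapezoid_deriv_def intro!: derivative_eq_intros)
    qed (use 2 trapezoid_left_ramp[OF d ab] in auto)
  next
    case 3
    with d show ?thesis
      by (intro piece[of "{a<..<b}" "\<lambda>_. 1"] trapezoid_inside[symmetric])
         (auto simp: trapezoid_deriv_def)
  next
    case 4
    show ?thesis
    proof (rule piece[of "{b<..<b + d}" "\<lambda>y. (b + d - y) / d"])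
      show "((\<lambda>y. (b + d - y) / d) has_real_derivative trapezoid_deriv a b d x) (at x)"
        using 4 d ab by (auto simp: trapezoid_deriv_def intro!: derivative_eq_intros)
    qed (use 4 trapezoid_right_ramp[OF d ab] in auto)
  next
    case 5
    with d ab show ?thesis
      by (intro piece[of "{b + d<..}" "\<lambda>_. 0"] trapezoid_outside[symmetric])
         (auto simp: trapezoid_deriv_def)
  qed
qed

lemma integrable_trapezoid_deriv:
  assumes "d > 0" and "a < b"
  shows "integrable lborel (trapezoid_deriv a b d)"
proof -
  have "trapezoid_deriv a b d
      = (\<lambda>x. (1 / d) * indicator {a - d<..<a} x - (1 / d) * indicator {b<..<b + d} x)"
    using assms by (auto simp: trapezoid_deriv_def indicator_def fun_eq_iff)
  moreover have "integrable lborel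
      (\<lambda>x. (1 / d) * indicator {a - d<..<a} x - (1 / d) * indicator {b<..<b + d} x :: real)"
    using assms
    by (intro Bochner_Integration.integrable_diff integrable_mult_right integrable_real_indicator) auto
  ultimately show ?thesis
    by simp
qed

lemma interval_integral_trapezoid_deriv:
  assumes d: "d > 0" and ab: "a < b"
  shows "(LBINT s=ereal u..ereal v. trapezoid_deriv a b d s) = trapezoid a b d v - trapezoid a b d u"
proof -
  have main: "(LBINT s=ereal u..ereal v. trapezoid_deriv a b d s) = trapezoid a b d v - trapezoid a b d u"
    if "u \<le> v" for u v
  proof -
    have "(trapezoid_deriv a b d has_integral (trapezoid a b d v - trapezoid a b d u)) {u..v}"
      using that trapezoid_has_derivative[OF d ab]
      by (intro fundamental_theorem_of_calculus_interior_strong[where S = "{a - d, a, b, b + d}"]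
          continuous_on_trapezoid) (auto simp: has_real_derivative_iff_has_vector_derivative)
    moreover have "set_integrable lborel {u..v} (trapezoid_deriv a b d)"
      unfolding set_integrable_def
      by (rule integrable_mult_indicator) (auto intro: integrable_trapezoid_deriv[OF d ab])
    ultimately show ?thesis
      using that by (simp add: interval_integral_Icc set_borel_integral_eq_integral(2) integral_unique)
  qed
  show ?thesis
  proof (cases "u \<le> v")
    case False
    then show ?thesis
      using main[of v u] by (subst interval_integral_endpoints_reverse) simp
  qed (rule main)
qed

lemma trapezoid_tendsto_indicator:
  assumes "\<And>m. d m > 0" and "d \<longlonglongrightarrow> 0"
  shows "(\<lambda>m. trapezoid a b (d m) x) \<longlonglongrightarrow> indicator {a..b} x"
proof -
  consider "x < a" | "b < x" | "a \<le> x \<and> x \<le> b"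
    by linarith
  then have "eventually (\<lambda>m. trapezoid a b (d m) x = indicator {a..b} x) sequentially"
  proof cases
    case 1
    show ?thesis
      using order_tendstoD(2)[OF assms(2), of "a - x"] 1
      by (auto elim!: eventually_mono intro!: trapezoid_outside assms(1))
  next
    case 2
    show ?thesis
      using order_tendstoD(2)[OF assms(2), of "x - b"] 2
      by (auto elim!: eventually_mono intro!: trapezoid_outside assms(1))
  qed (auto intro!: always_eventually trapezoid_inside assms(1))
  then show ?thesis
    by (rule tendsto_eventually)
qed

lemma integrable_bounded_mult_gauss_poly:
  assumes "\<phi> \<in> borel_measurable borel" and "\<And>x. \<bar>\<phi> x\<bar> \<le> C" and "c > 0"
  shows "integrable lborel (\<lambda>x. \<phi> x * gauss_poly c R x)"
proof (rule Bochner_Integration.integrable_bound)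
  show "integrable lborel (\<lambda>x. C * \<bar>gauss_poly c R x\<bar>)"
    using assms(3) by (intro integrable_mult_right integrable_abs integrable_gauss_poly)
  show "AE x in lborel. norm (\<phi> x * gauss_poly c R x) \<le> norm (C * \<bar>gauss_poly c R x\<bar>)"
    using mult_right_mono[OF assms(2) abs_ge_zero] order_trans[OF abs_ge_zero assms(2)]
    by (intro AE_I2) (simp add: abs_mult)
qed (use assms(1) in measurable)

lemma integral_trapezoid_deriv_gauss_poly:
  assumes d: "d > 0" and ab: "a < b" and c: "c > 0"
  shows "integral\<^sup>L lborel (\<lambda>x. trapezoid_deriv a b d x * gauss_poly c R x)
       = - integral\<^sup>L lborel (\<lambda>x. trapezoid a b d x * gauss_poly c (gauss_poly_deriv c R) x)"
proof -
  let ?F' = "\<lambda>x. trapezoid_deriv a b d x * gauss_poly c R x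
    + trapezoid a b d x * gauss_poly c (gauss_poly_deriv c R) x"
  have int1: "integrable lborel (\<lambda>x. trapezoid_deriv a b d x * gauss_poly c R x)"
    using trapezoid_deriv_bound[OF d] c by (intro integrable_bounded_mult_gauss_poly) auto
  have int2: "integrable lborel (\<lambda>x. trapezoid a b d x * gauss_poly c (gauss_poly_deriv c R) x)"
    using trapezoid_bounds c by (intro integrable_bounded_mult_gauss_poly[where C = 1]) auto
  have "(?F' has_integral (trapezoid a b d (b + d) * gauss_poly c R (b + d)
      - trapezoid a b d (a - d) * gauss_poly c R (a - d))) {a - d..b + d}"
  proof (rule fundamental_theorem_of_calculus_interior_strong[where S = "{a - d, a, b, b + d}"])
    show "((\<lambda>x. trapezoid a b d x * gauss_poly c R x) has_vector_derivative ?F' x) (at x)"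
      if "x \<in> {a - d<..<b + d} - {a - d, a, b, b + d}" for x
      using that DERIV_mult[OF trapezoid_has_derivative[OF d ab] gauss_poly_has_derivative, of x]
      by (simp add: has_real_derivative_iff_has_vector_derivative mult.commute)
  qed (use d ab in \<open>auto intro!: continuous_intros continuous_on_trapezoid continuous_on_gauss_poly\<close>)
  moreover have "trapezoid a b d (b + d) = 0" "trapezoid a b d (a - d) = 0"
    unfolding trapezoid_def by auto
  moreover have "integral\<^sup>L lborel ?F' = (LINT x:{a - d..b + d}|lborel. ?F' x)"
    unfolding set_lebesgue_integral_def
  proof (rule Bochner_Integration.integral_cong[OF refl])
    fix x
    show "?F' x = indicator {a - d..b + d} x *\<^sub>R ?F' x"
      using trapezoid_outside[OF d, of x] trapezoid_deriv_outside[OF d ab, of x]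
      by (cases "x \<in> {a - d..b + d}") simp_all
  qed
  moreover have "set_integrable lborel {a - d..b + d} ?F'"
    unfolding set_integrable_def using int1 int2 by (intro integrable_mult_indicator) auto
  ultimately have "integral\<^sup>L lborel ?F' = 0"
    by (simp add: set_borel_integral_eq_integral(2) integral_unique)
  then show ?thesis
    using int1 int2 by simp
qed

section \<open>The action of \<open>t\<close> and \<open>t\<^sup>*\<close> on Gaussian-weighted polynomials\<close>

lemma L2_inner_of_real:
  "L2_inner (\<lambda>x. a * complex_of_real (\<phi> x)) (\<lambda>x. b * complex_of_real (\<psi> x))
     = a * cnj b * complex_of_real (integral\<^sup>L lborel (\<lambda>x. \<phi> x * \<psi> x))"
proof -
  have "L2_inner (\<lambda>x. a * complex_of_real (\<phi> x)) (\<lambda>x. b * complex_of_real (\<psi> x))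
      = integral\<^sup>L lborel (\<lambda>x. a * cnj b * complex_of_real (\<phi> x * \<psi> x))"
    unfolding L2_inner_def by (simp add: mult_ac)
  also have "\<dots> = a * cnj b * complex_of_real (integral\<^sup>L lborel (\<lambda>x. \<phi> x * \<psi> x))"
    by (simp only: integral_mult_right_zero integral_complex_of_real)
  finally show ?thesis .
qed

lemma L2_inner_cong_AE:
  assumes "u \<in> L2" "u' \<in> L2" "g \<in> L2" "g' \<in> L2"
    and "AE x in lborel. u x = u' x" "AE x in lborel. g x = g' x"
  shows "L2_inner u g = L2_inner u' g'"
  unfolding L2_inner_def
proof (rule integral_cong_AE)
  show "AE x in lborel. u x * cnj (g x) = u' x * cnj (g' x)"
    using assms(5,6) by eventually_elim simp
qed (use borel_measurable_integrable L2_integrable_inner assms(1-4) in blast)+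

lemma L2_inner_diff_right:
  "f \<in> L2 \<Longrightarrow> g \<in> L2 \<Longrightarrow> e \<in> L2 \<Longrightarrow>
     L2_inner e (\<lambda>x. f x - g x) = L2_inner e f - L2_inner e g"
  using L2_inner_diff_left[of f g e] L2_inner_cnj by (metis complex_cnj_diff)

lemma gauss_poly_pCons_0: "gauss_poly c (pCons 0 P) x = x * gauss_poly c P x"
  by (simp add: gauss_poly_def)

lemma gauss_poly_deriv_eq_pCons_t_poly:
  assumes "poly (pderiv P) 0 = 0"
  shows "gauss_poly_deriv c P = pCons 0 (t_poly c P)"
  unfolding gauss_poly_deriv_def t_poly_def
  by (subst (1) pCons_synthetic_div_0[symmetric, OF assms]) simp

lemma t_rel_L2: "t_rel f g \<Longrightarrow> f \<in> L2 \<and> g \<in> L2"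
  by (auto simp: t_rel_def p_rel_def qinv_rel_def)

lemma t_rel_gauss_poly:
  assumes t: "t_rel f g"
    and f: "AE x in lborel. f x = a * complex_of_real (gauss_poly c P x)"
    and P: "poly (pderiv P) 0 = 0"
  shows "AE x in lborel. g x = (- \<i> * a) * complex_of_real (gauss_poly c (t_poly c P) x)"
proof -
  from t obtain h where p: "p_rel f h" and q: "qinv_rel h g"
    unfolding t_rel_def by blast
  have "AE x in lborel. h x = - \<i> * (a * complex_of_real (gauss_poly c (gauss_poly_deriv c P) x))"
    by (rule p_rel_derivative[OF p f])
       (intro has_vector_derivative_mult_right has_vector_derivative_of_real gauss_poly_has_derivative,
        intro continuous_intros continuous_on_gauss_poly)
  moreover have "AE x in lborel. g x = h x / complex_of_real x"
    using q unfolding qinv_rel_def by blast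
  ultimately show ?thesis
    using AE_lborel_singleton[of 0]
    by eventually_elim (simp add: gauss_poly_deriv_eq_pCons_t_poly[OF P] gauss_poly_pCons_0)
qed

lemma t_rel_trapezoid:
  assumes d: "d > 0" and ab: "a < b" and \<mu>: "\<mu> > 0"
    and ramp: "\<And>x. trapezoid_deriv a b d x \<noteq> 0 \<Longrightarrow> \<mu> \<le> \<bar>x\<bar>"
  shows "t_rel (\<lambda>x. complex_of_real (trapezoid a b d x))
    (\<lambda>x. - \<i> * complex_of_real (trapezoid_deriv a b d x / x))"
proof -
  define h where "h = (\<lambda>x. - \<i> * complex_of_real (trapezoid_deriv a b d x))"
  have support: "x \<notin> {a - d..b + d} \<Longrightarrow> trapezoid_deriv a b d x / x = 0" for x
    using trapezoid_deriv_outside[OF d ab] by simp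
  have "\<bar>trapezoid_deriv a b d x / x\<bar> \<le> 1 / (d * \<mu>)" for x
  proof (cases "trapezoid_deriv a b d x = 0")
    case False
    then have "\<bar>trapezoid_deriv a b d x\<bar> / \<bar>x\<bar> \<le> (1 / d) / \<mu>"
      using ramp trapezoid_deriv_bound[OF d] \<mu> d by (intro frac_le) auto
    then show ?thesis
      by (simp add: abs_divide)
  qed (use d \<mu> in simp)
  then have u: "(\<lambda>x. - \<i> * complex_of_real (trapezoid_deriv a b d x / x)) \<in> L2"
    using support by (intro L2_of_real_bounded_support) auto
  have f: "(\<lambda>x. complex_of_real (trapezoid a b d x)) \<in> L2"
    using L2_of_real_bounded_support[of "trapezoid a b d" 1 "a - d" "b + d" 1]
      trapezoid_bounds trapezoid_outside[OF d] by simp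
  have h: "h \<in> L2"
    unfolding h_def using trapezoid_deriv_bound[OF d] trapezoid_deriv_outside[OF d ab]
    by (intro L2_of_real_bounded_support) auto
  have "AE x in lborel. complex_of_real (trapezoid a b d x)
      = complex_of_real (trapezoid a b d 0) + interval_lebesgue_integral lborel (ereal 0) (ereal x) (\<lambda>s. \<i> * h s)"
    by (simp add: h_def interval_lebesgue_integral_of_real interval_integral_trapezoid_deriv[OF d ab])
  with f h have "p_rel (\<lambda>x. complex_of_real (trapezoid a b d x)) h"
    unfolding p_rel_def by blast
  moreover have "qinv_rel h (\<lambda>x. - \<i> * complex_of_real (trapezoid_deriv a b d x / x))"
    unfolding qinv_rel_def using h u by (simp add: h_def)
  ultimately show ?thesis
    unfolding t_rel_def by blast
qed

lemma L2_inner_t_trapezoid_gauss_poly: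
  assumes c: "c > 0" and d: "d > 0" and ab: "a < b" and "trapezoid_deriv a b d 0 = 0"
    and Q: "poly Q 0 = 0"
  shows "L2_inner (\<lambda>x. - \<i> * complex_of_real (trapezoid_deriv a b d x / x))
      (\<lambda>x. a0 * complex_of_real (gauss_poly c Q x))
    = L2_inner (\<lambda>x. complex_of_real (trapezoid a b d x))
      (\<lambda>x. (- \<i> * a0) * complex_of_real (gauss_poly c (tadj_poly c Q) x))"
proof -
  define R where "R = synthetic_div Q 0"
  have "trapezoid_deriv a b d x / x * gauss_poly c Q x = trapezoid_deriv a b d x * gauss_poly c R x" for x
    using assms(4) unfolding R_def
    by (cases "x = 0") (auto simp: poly_synthetic_div_0[OF Q] gauss_poly_def)
  then have "L2_inner (\<lambda>x. - \<i> * complex_of_real (trapezoid_deriv a b d x / x))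
      (\<lambda>x. a0 * complex_of_real (gauss_poly c Q x))
    = - \<i> * cnj a0 * complex_of_real (integral\<^sup>L lborel (\<lambda>x. trapezoid_deriv a b d x * gauss_poly c R x))"
    by (simp only: L2_inner_of_real)
  moreover have "L2_inner (\<lambda>x. complex_of_real (trapezoid a b d x))
      (\<lambda>x. (- \<i> * a0) * complex_of_real (gauss_poly c (tadj_poly c Q) x))
    = 1 * cnj (- \<i> * a0) * complex_of_real
        (integral\<^sup>L lborel (\<lambda>x. trapezoid a b d x * gauss_poly c (tadj_poly c Q) x))"
    using L2_inner_of_real[of 1 "trapezoid a b d" "- \<i> * a0"] by simp
  ultimately show ?thesis
    using integral_trapezoid_deriv_gauss_poly[OF d ab c, of R] by (simp add: tadj_poly_def R_def)
qed

lemma tadj_rel_trapezoid_orthogonal: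
  assumes c: "c > 0" and tadj: "tadj_rel g w"
    and g: "AE x in lborel. g x = a0 * complex_of_real (gauss_poly c Q x)" and Q: "poly Q 0 = 0"
    and d: "d > 0" and ab: "a < b" and \<mu>: "\<mu> > 0"
    and ramp: "\<And>x. trapezoid_deriv a b d x \<noteq> 0 \<Longrightarrow> \<mu> \<le> \<bar>x\<bar>"
  shows "integral\<^sup>L lborel (\<lambda>x. trapezoid a b d x *\<^sub>R
    cnj (w x - (- \<i> * a0) * complex_of_real (gauss_poly c (tadj_poly c Q) x))) = 0"
proof -
  define f where "f = (\<lambda>x. complex_of_real (trapezoid a b d x))"
  define u where "u = (\<lambda>x. - \<i> * complex_of_real (trapezoid_deriv a b d x / x))"
  define w0 where "w0 = (\<lambda>x. (- \<i> * a0) * complex_of_real (gauss_poly c (tadj_poly c Q) x))"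
  have t: "t_rel f u"
    unfolding f_def u_def by (rule t_rel_trapezoid[OF d ab \<mu> ramp])
  then have f_L2: "f \<in> L2" and u_L2: "u \<in> L2"
    using t_rel_L2 by blast+
  have g_L2: "g \<in> L2" and w_L2: "w \<in> L2" and adj: "L2_inner u g = L2_inner f w"
    using tadj t unfolding tadj_rel_def by auto
  have w0_L2: "w0 \<in> L2"
    unfolding w0_def by (rule gauss_poly_L2[OF c])
  have "L2_inner u g = L2_inner u (\<lambda>x. a0 * complex_of_real (gauss_poly c Q x))"
    by (rule L2_inner_cong_AE[OF u_L2 u_L2 g_L2 gauss_poly_L2[OF c] AE_I2[OF refl] g])
  also have "\<dots> = L2_inner f w0"
    unfolding u_def f_def w0_def using ramp[of 0] \<mu>
    by (intro L2_inner_t_trapezoid_gauss_poly[OF c d ab _ Q]) force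
  finally have "L2_inner f (\<lambda>x. w x - w0 x) = 0"
    using adj by (simp add: L2_inner_diff_right[OF w_L2 w0_L2 f_L2])
  then show ?thesis
    by (simp add: L2_inner_def f_def w0_def scaleR_conv_of_real)
qed

lemma set_integral_Icc_eq_0_if_trapezoids:
  fixes r :: "real \<Rightarrow> complex"
  assumes loc: "\<And>a b. set_integrable lborel {a..b} r" and "\<mu> > 0"
    and zero: "\<And>d. 0 < d \<Longrightarrow> d \<le> \<mu> \<Longrightarrow> integral\<^sup>L lborel (\<lambda>x. trapezoid a b d x *\<^sub>R r x) = 0"
  shows "(LINT x:{a..b}|lborel. r x) = 0"
proof -
  define d where "d = (\<lambda>m. \<mu> * inverse (real (Suc m)))"
  have d: "0 < d m" "d m \<le> \<mu>" for m
    using \<open>\<mu> > 0\<close> by (auto simp: d_def field_simps)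
  have "d \<longlonglongrightarrow> 0"
    unfolding d_def by (rule tendsto_mult_right_zero[OF LIMSEQ_inverse_real_of_nat])
  define K where "K = \<bar>a\<bar> + \<bar>b\<bar> + \<mu>"
  have "(\<lambda>m. integral\<^sup>L lborel (\<lambda>x. trapezoid a b (d m) x *\<^sub>R r x))
      \<longlonglongrightarrow> integral\<^sup>L lborel (\<lambda>x. indicator {a..b} x *\<^sub>R r x)"
  proof (rule integral_weighted_tendsto[where K = K])
    show "\<bar>trapezoid a b (d m) x\<bar> \<le> indicat_real {- K..K} x" for m x
      using trapezoid_bounds[of a b "d m" x] trapezoid_outside[OF d(1)[of m], where x = x and a = a and b = b]
        d[of m] by (cases "x \<in> {a - d m..b + d m}") (auto simp: K_def indicator_def)
    show "(\<lambda>m. trapezoid a b (d m) x) \<longlonglongrightarrow> indicat_real {a..b} x" for x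
      by (rule trapezoid_tendsto_indicator[OF d(1) \<open>d \<longlonglongrightarrow> 0\<close>])
  qed (use loc in auto)
  with zero[OF d] show ?thesis
    by (simp add: set_lebesgue_integral_def LIMSEQ_const_iff)
qed

lemma tadj_rel_gauss_poly:
  assumes c: "c > 0" and tadj: "tadj_rel g w"
    and g: "AE x in lborel. g x = a0 * complex_of_real (gauss_poly c Q x)" and Q: "poly Q 0 = 0"
  shows "AE x in lborel. w x = (- \<i> * a0) * complex_of_real (gauss_poly c (tadj_poly c Q) x)"
proof -
  define w0 where "w0 = (\<lambda>x. (- \<i> * a0) * complex_of_real (gauss_poly c (tadj_poly c Q) x))"
  define r where "r = (\<lambda>x. cnj (w x - w0 x))"
  have "w \<in> L2"
    using tadj unfolding tadj_rel_def by auto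
  then have r_L2: "r \<in> L2"
    unfolding r_def w0_def by (intro L2_cnj L2_diff gauss_poly_L2 c)
  have "AE x in lborel. r x = 0"
  proof (rule AE_eq_0_if_set_integrals_Icc_eq_0)
    show loc: "set_integrable lborel {a..b} r" for a b
      by (rule L2_set_integrable_Icc[OF r_L2])
    show "(LINT x:{a..b}|lborel. r x) = 0" for a b
    proof (rule set_integral_Icc_eq_0_if_dense[where E = "- {0}"])
      show "AE x in lborel. x \<in> - {0}"
        using AE_lborel_singleton[of 0] by simp
      fix a b :: real
      assume "a \<in> - {0}" "b \<in> - {0}" "a < b"
      define \<mu> where "\<mu> = min \<bar>a\<bar> \<bar>b\<bar> / 2"
      have "\<mu> > 0"
        using \<open>a \<in> - {0}\<close> \<open>b \<in> - {0}\<close> by (simp add: \<mu>_def)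
      show "(LINT x:{a..b}|lborel. r x) = 0"
      proof (rule set_integral_Icc_eq_0_if_trapezoids[OF loc \<open>\<mu> > 0\<close>])
        fix d :: real
        assume "0 < d" "d \<le> \<mu>"
        \<comment> \<open>the ramps of the trapezoid stay away from the singularity of \<open>q\<^sup>-\<^sup>1\<close> at \<open>0\<close>\<close>
        then have "\<mu> \<le> \<bar>x\<bar>" if "trapezoid_deriv a b d x \<noteq> 0" for x
          using that \<open>\<mu> > 0\<close> by (auto simp: trapezoid_deriv_def \<mu>_def abs_if split: if_splits)
        then show "integral\<^sup>L lborel (\<lambda>x. trapezoid a b d x *\<^sub>R r x) = 0"
          unfolding r_def w0_def
          by (rule tadj_rel_trapezoid_orthogonal[OF c tadj g Q \<open>0 < d\<close> \<open>a < b\<close> \<open>\<mu> > 0\<close>])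
      qed
    qed (rule loc)
  qed
  then show ?thesis
    by eventually_elim (simp only: r_def w0_def complex_cnj_zero_iff right_minus_eq)
qed

section \<open>Divergence of the arctangent series on the eigenvectors\<close>

lemma rel_pow_gauss_poly:
  assumes step: "\<And>f g a P. R f g \<Longrightarrow> (AE x in lborel. f x = a * complex_of_real (gauss_poly c P x)) \<Longrightarrow>
      Inv P \<Longrightarrow> AE x in lborel. g x = (- \<i> * a) * complex_of_real (gauss_poly c (T P) x)"
    and inv: "\<And>P. Inv P \<Longrightarrow> Inv (T P)"
  shows "rel_pow R j f g \<Longrightarrow> (AE x in lborel. f x = a * complex_of_real (gauss_poly c P x)) \<Longrightarrow> Inv P \<Longrightarrow>
      AE x in lborel. g x = ((- \<i>) ^ j * a) * complex_of_real (gauss_poly c ((T ^^ j) P) x)"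
proof (induction j arbitrary: f a P)
  case (Suc j)
  from Suc.prems(1) obtain h where "R f h" and "rel_pow R j h g"
    by auto
  have "AE x in lborel. h x = (- \<i> * a) * complex_of_real (gauss_poly c (T P) x)"
    by (rule step[OF \<open>R f h\<close> Suc.prems(2,3)])
  then have "AE x in lborel. g x = ((- \<i>) ^ j * (- \<i> * a)) * complex_of_real (gauss_poly c ((T ^^ j) (T P)) x)"
    by (rule Suc.IH[OF \<open>rel_pow R j h g\<close> _ inv[OF Suc.prems(3)]])
  then show ?case
    by (simp only: funpow_Suc_right o_apply power_Suc2 mult.assoc)
qed simp

lemma rel_pow_Suc_L2:
  assumes "\<And>f g. R f g \<Longrightarrow> g \<in> L2"
  shows "rel_pow R (Suc j) f g \<Longrightarrow> g \<in> L2"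
proof (induction j arbitrary: f)
  case (Suc j)
  then obtain h where "R f h" "rel_pow R (Suc j) h g"
    by auto
  then show ?case
    using Suc.IH by blast
qed (use assms in auto)

lemma hermite_moment_funpow:
  assumes "\<And>P. Inv P \<Longrightarrow> hermite_moment s n (T P) = z * hermite_moment s n P"
    and "\<And>P. Inv P \<Longrightarrow> Inv (T P)"
  shows "Inv P \<Longrightarrow> hermite_moment s n ((T ^^ j) P) = z ^ j * hermite_moment s n P"
proof (induction j arbitrary: P)
  case (Suc j)
  then show ?case
    using assms by (simp only: funpow_Suc_right o_apply) simp
qed simp

lemma L2_inner_gauss_poly_hermite:
  assumes "s > 0"
  shows "L2_inner (\<lambda>x. a * complex_of_real (gauss_poly (1 / (2 * s\<^sup>2)) P x))
      (\<lambda>x. b * complex_of_real (gauss_poly (1 / (2 * s\<^sup>2)) (scaled_hermite_poly s n) x))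
    = a * cnj b * complex_of_real (hermite_moment s n P)"
proof -
  have "gauss_poly (1 / (2 * s\<^sup>2)) P x * gauss_poly (1 / (2 * s\<^sup>2)) Q x = gauss_poly (1 / s\<^sup>2) (P * Q) x"
    for Q x
    by (simp add: gauss_poly_def field_simps flip: exp_add)
  then show ?thesis
    by (simp add: L2_inner_of_real hermite_moment_def)
qed

lemma odd_harmonic_not_summable: "\<not> summable (\<lambda>k. 1 / real (2 * k + 1))"
proof
  assume "summable (\<lambda>k. 1 / real (2 * k + 1))"
  then have "summable (\<lambda>k. 2 * (1 / real (2 * k + 1)))"
    by (rule summable_mult)
  then have "summable (\<lambda>n. inverse (real (Suc n)))"
    by (rule summable_comparison_test[rotated]) (auto simp: field_simps)
  then show False
    using not_summable_harmonic[where 'a = real] summable_Suc_iff[of "\<lambda>n. inverse (real n) :: real"]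
    by simp
qed

lemma arctan_coeff_times_power:
  assumes "\<sigma> > 0"
  shows "complex_of_real ((-1) ^ k / real (2 * k + 1) * \<sigma> ^ (2 * k + 1)) * (\<i> / complex_of_real \<sigma>) ^ (2 * k + 1)
    = \<i> * complex_of_real (1 / real (2 * k + 1))"
proof -
  have "\<i> ^ (2 * k + 1) = \<i> * (-1) ^ k"
    by (simp add: power_add power_mult)
  then have "(\<i> / complex_of_real \<sigma>) ^ (2 * k + 1) = \<i> * (-1) ^ k / complex_of_real (\<sigma> ^ (2 * k + 1))"
    by (simp add: power_divide)
  moreover have "(-1 :: complex) ^ k * (-1) ^ k = 1"
    by (simp flip: power_mult_distrib)
  ultimately show ?thesis
    using assms by (simp add: field_simps)
qed

lemma arctan_series_diverges:
  assumes \<sigma>: "\<sigma> > 0" and e: "e \<in> L2" and u: "\<And>k. u k \<in> L2" and F: "F \<in> L2"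
    and inner: "\<And>k. L2_inner (u k) e = (\<i> / complex_of_real \<sigma>) ^ (2 * k + 1)"
  shows "\<not> (\<lambda>N. L2_norm (\<lambda>x. (\<Sum>n\<le>N. complex_of_real ((-1) ^ n / real (2 * n + 1) * \<sigma> ^ (2 * n + 1))
    * u n x) - F x)) \<longlonglongrightarrow> 0"
proof
  define S where "S = (\<lambda>N x. \<Sum>n\<le>N. complex_of_real ((-1) ^ n / real (2 * n + 1) * \<sigma> ^ (2 * n + 1)) * u n x)"
  assume "(\<lambda>N. L2_norm (\<lambda>x. S N x - F x)) \<longlonglongrightarrow> 0"
  moreover have S_L2: "S N \<in> L2" for N
    unfolding S_def by (intro L2_sum L2_cmult u)
  ultimately have lim: "(\<lambda>N. L2_inner (S N) e) \<longlonglongrightarrow> L2_inner F e"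
    by (intro L2_inner_tendsto F e)
  have "L2_inner (S N) e = (\<Sum>n\<le>N. complex_of_real ((-1) ^ n / real (2 * n + 1) * \<sigma> ^ (2 * n + 1))
      * L2_inner (u n) e)" for N
    unfolding L2_inner_def S_def sum_distrib_right mult.assoc
    by (subst Bochner_Integration.integral_sum) (auto intro!: integrable_mult_right L2_integrable_inner u e)
  also have "\<dots> N = (\<Sum>n\<le>N. \<i> * complex_of_real (1 / real (2 * n + 1)))" for N
    unfolding inner by (intro sum.cong refl arctan_coeff_times_power[OF \<sigma>])
  finally have "(\<lambda>N. Im (\<Sum>n\<le>N. \<i> * complex_of_real (1 / real (2 * n + 1)))) \<longlonglongrightarrow> Im (L2_inner F e)"
    using tendsto_Im[OF lim] by simp
  then have "(\<lambda>N. \<Sum>n\<le>N. 1 / real (2 * n + 1)) \<longlonglongrightarrow> Im (L2_inner F e)"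
    by (simp add: Im_sum)
  then have "summable (\<lambda>k. 1 / real (2 * k + 1))"
    unfolding summable_iff_convergent' convergent_def by auto
  then show False
    using odd_harmonic_not_summable by blast
qed

text \<open>Both \<open>t\<close> (for even \<open>n\<close>) and \<open>t\<^sup>*\<close> (for odd \<open>n\<close>) are instances.\<close>
locale gaussian_ladder =
  fixes R :: "(real \<Rightarrow> complex) \<Rightarrow> (real \<Rightarrow> complex) \<Rightarrow> bool"
    and T :: "real poly \<Rightarrow> real poly" and Inv :: "real poly \<Rightarrow> bool" and s :: real and n :: nat
  assumes s_pos: "s > 0"
    and step: "\<And>f g a P. R f g \<Longrightarrow>
      (AE x in lborel. f x = a * complex_of_real (gauss_poly (1 / (2 * s\<^sup>2)) P x)) \<Longrightarrow> Inv P \<Longrightarrow>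
      AE x in lborel. g x = (- \<i> * a) * complex_of_real (gauss_poly (1 / (2 * s\<^sup>2)) (T P) x)"
    and invariant: "\<And>P. Inv P \<Longrightarrow> Inv (T P)"
    and moment: "\<And>P. Inv P \<Longrightarrow> hermite_moment s n (T P) = - (1 / s\<^sup>2) * hermite_moment s n P"
    and R_L2: "\<And>f g. R f g \<Longrightarrow> g \<in> L2"
    and Inv_hermite: "Inv (scaled_hermite_poly s n)"
begin

lemma L2_inner_rel_pow:
  fixes \<kappa> :: real
  defines "e \<equiv> \<lambda>x. complex_of_real \<kappa> * complex_of_real (gauss_poly (1 / (2 * s\<^sup>2)) (scaled_hermite_poly s n) x)"
  assumes norm: "\<kappa>\<^sup>2 * hermite_moment s n (scaled_hermite_poly s n) = 1" and u: "rel_pow R (Suc j) e u"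
  shows "L2_inner u e = (\<i> / complex_of_real (s\<^sup>2)) ^ Suc j"
proof -
  let ?H = "scaled_hermite_poly s n" and ?c = "1 / (2 * s\<^sup>2)"
  have "?c > 0"
    using s_pos by simp
  have u_L2: "u \<in> L2"
    using rel_pow_Suc_L2[of R, OF R_L2 u] .
  have e_L2: "e \<in> L2"
    unfolding e_def using \<open>?c > 0\<close> by (rule gauss_poly_L2)
  have "AE x in lborel. u x = ((- \<i>) ^ Suc j * \<kappa>) * complex_of_real (gauss_poly ?c ((T ^^ Suc j) ?H) x)"
    by (rule rel_pow_gauss_poly[where R = R and T = T and Inv = Inv, OF step invariant u])
       (simp_all add: e_def Inv_hermite)
  then have "L2_inner u e
      = L2_inner (\<lambda>x. ((- \<i>) ^ Suc j * \<kappa>) * complex_of_real (gauss_poly ?c ((T ^^ Suc j) ?H) x)) e"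
    by (rule L2_inner_cong_AE[OF u_L2 gauss_poly_L2[OF \<open>?c > 0\<close>] e_L2 e_L2 _ AE_I2[OF refl]])
  also have "\<dots> = (- \<i>) ^ Suc j * \<kappa> * cnj \<kappa> * complex_of_real (hermite_moment s n ((T ^^ Suc j) ?H))"
    unfolding e_def by (rule L2_inner_gauss_poly_hermite[OF s_pos])
  also have "hermite_moment s n ((T ^^ Suc j) ?H) = (- (1 / s\<^sup>2)) ^ Suc j * hermite_moment s n ?H"
    by (rule hermite_moment_funpow[OF moment invariant Inv_hermite])
  also have "(- \<i>) ^ Suc j * \<kappa> * cnj \<kappa> * complex_of_real ((- (1 / s\<^sup>2)) ^ Suc j * hermite_moment s n ?H)
      = (- \<i>) ^ Suc j * complex_of_real ((- (1 / s\<^sup>2)) ^ Suc j * (\<kappa>\<^sup>2 * hermite_moment s n ?H))"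
    by (simp add: power2_eq_square)
  also have "\<dots> = ((- \<i>) * complex_of_real (- (1 / s\<^sup>2))) ^ Suc j"
    by (simp only: norm mult_1_right of_real_power power_mult_distrib)
  also have "(- \<i>) * complex_of_real (- (1 / s\<^sup>2)) = \<i> / complex_of_real (s\<^sup>2)"
    by simp
  finally show ?thesis .
qed

lemma not_in_D_series:
  fixes \<kappa> :: real
  assumes "\<kappa>\<^sup>2 * hermite_moment s n (scaled_hermite_poly s n) = 1" and "sqrt \<epsilon> = s\<^sup>2"
  shows "(\<lambda>x. complex_of_real \<kappa> * complex_of_real (gauss_poly (1 / (2 * s\<^sup>2)) (scaled_hermite_poly s n) x))
    \<notin> D_series \<epsilon> R V" (is "?e \<notin> _")
proof
  assume "?e \<in> D_series \<epsilon> R V"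
  then obtain u F where u: "\<And>k. rel_pow R (2 * k + 1) ?e (u k)" and "F \<in> L2"
    and conv: "(\<lambda>N. L2_norm (\<lambda>x. (\<Sum>n\<le>N. complex_of_real ((-1) ^ n / real (2 * n + 1)
      * sqrt \<epsilon> ^ (2 * n + 1)) * u n x) - F x)) \<longlonglongrightarrow> 0"
    unfolding D_series_def by blast
  have inner: "L2_inner (u k) ?e = (\<i> / complex_of_real (s\<^sup>2)) ^ (2 * k + 1)" for k
    using L2_inner_rel_pow[OF assms(1)] u[of k] by simp
  have "u k \<in> L2" for k
    using rel_pow_Suc_L2[of R, OF R_L2] u[of k] by simp
  moreover have "?e \<in> L2"
    using s_pos by (intro gauss_poly_L2) simp
  ultimately have "\<not> (\<lambda>N. L2_norm (\<lambda>x. (\<Sum>n\<le>N. complex_of_real ((-1) ^ n / real (2 * n + 1)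
      * (s\<^sup>2) ^ (2 * n + 1)) * u n x) - F x)) \<longlonglongrightarrow> 0"
    using s_pos by (intro arctan_series_diverges[OF _ _ _ \<open>F \<in> L2\<close> inner]) auto
  with conv assms(2) show False
    by simp
qed

end

section \<open>The eigenvectors \<open>e\<^sub>n\<close>\<close>

lemma powr_quarter_squared: "\<epsilon> > 0 \<Longrightarrow> (\<epsilon> powr (1 / 4))\<^sup>2 = sqrt \<epsilon>"
  by (simp add: powr_half_sqrt[symmetric] power2_eq_square flip: powr_add)

lemma herm_unnorm_eq_gauss_poly:
  assumes "\<epsilon> > 0" and "s = \<epsilon> powr (1 / 4)"
  shows "herm_unnorm \<epsilon> n = gauss_poly (1 / (2 * s\<^sup>2)) (scaled_hermite_poly s n)"
  using assms powr_quarter_squared[OF assms(1)]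
  by (simp add: fun_eq_iff herm_unnorm_def gauss_poly_def poly_scaled_hermite_poly)

lemma herm_const_normalizes:
  assumes "\<epsilon> > 0" and s: "s = \<epsilon> powr (1 / 4)"
  shows "(herm_const \<epsilon> n)\<^sup>2 * hermite_moment s n (scaled_hermite_poly s n) = 1"
proof -
  have "s > 0"
    using assms by simp
  have "(herm_unnorm \<epsilon> n x)\<^sup>2 = gauss_poly (1 / s\<^sup>2) (scaled_hermite_poly s n * scaled_hermite_poly s n) x"
    for x
    by (simp add: herm_unnorm_eq_gauss_poly[OF assms] gauss_poly_def power2_eq_square field_simps
        flip: exp_add)
  then have "(LINT x|lborel. (herm_unnorm \<epsilon> n x)\<^sup>2) = hermite_moment s n (scaled_hermite_poly s n)"
    by (simp add: hermite_moment_def)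
  with hermite_moment_self_pos[OF \<open>s > 0\<close>, of n] show ?thesis
    by (simp add: herm_const_def power_divide)
qed

lemma eigvec_eq_gauss_poly:
  assumes "\<epsilon> > 0" and "s = \<epsilon> powr (1 / 4)"
  shows "eigvec \<epsilon> n = (\<lambda>x. complex_of_real (herm_const \<epsilon> n)
    * complex_of_real (gauss_poly (1 / (2 * s\<^sup>2)) (scaled_hermite_poly s n) x))"
  by (simp add: fun_eq_iff eigvec_def herm_unnorm_eq_gauss_poly[OF assms])

lemma L2_inner_eigvec_self:
  assumes "\<epsilon> > 0"
  shows "L2_inner (eigvec \<epsilon> n) (eigvec \<epsilon> n) = 1"
proof -
  define s where "s = \<epsilon> powr (1 / 4)"
  then have "s > 0"
    using assms by simp
  have "L2_inner (eigvec \<epsilon> n) (eigvec \<epsilon> n) = complex_of_real (herm_const \<epsilon> n)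
      * cnj (complex_of_real (herm_const \<epsilon> n)) * complex_of_real (hermite_moment s n (scaled_hermite_poly s n))"
    unfolding eigvec_eq_gauss_poly[OF assms s_def] by (rule L2_inner_gauss_poly_hermite[OF \<open>s > 0\<close>])
  also have "\<dots> = complex_of_real ((herm_const \<epsilon> n)\<^sup>2 * hermite_moment s n (scaled_hermite_poly s n))"
    by (simp add: power2_eq_square)
  finally show ?thesis
    using herm_const_normalizes[OF assms s_def] by simp
qed

lemma eigvec_minus: "eigvec \<epsilon> n (- x) = (-1) ^ n * eigvec \<epsilon> n x"
  by (simp add: eigvec_def herm_unnorm_def hermite_minus minus_divide_left[symmetric])

lemma not_AE_parity:
  assumes "L2_inner e e \<noteq> 0" and "\<And>x. e (- x) = z * e x" and "z \<noteq> z'"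
  shows "\<not> (AE x in lborel. e (- x) = z' * e x)"
proof
  assume "AE x in lborel. e (- x) = z' * e x"
  then have "AE x in lborel. e x * cnj (e x) = 0"
  proof eventually_elim
    case (elim x)
    then have "(z - z') * e x = 0"
      using assms(2)[of x] by (simp add: algebra_simps)
    with assms(3) show ?case
      by simp
  qed
  then have "L2_inner e e = 0"
    unfolding L2_inner_def by (rule integral_eq_zero_AE)
  with assms(1) show False ..
qed

lemma eigvec_not_in_D_S:
  assumes "\<epsilon> > 0"
  shows "eigvec \<epsilon> n \<notin> D_S \<epsilon>"
proof (cases "even n")
  case True
  define s where "s = \<epsilon> powr (1 / 4)"
  have "s > 0"
    using assms by (simp add: s_def)
  interpret gaussian_ladder t_rel "t_poly (1 / (2 * s\<^sup>2))" "\<lambda>P. poly_parity P 1 \<and> degree P \<le> n" s n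
  proof
    show "AE x in lborel. g x = (- \<i> * a) * complex_of_real (gauss_poly c (t_poly c P) x)"
      if "t_rel f g" "AE x in lborel. f x = a * complex_of_real (gauss_poly c P x)"
        "poly_parity P 1 \<and> degree P \<le> n" for f g a P and c :: real
      using that poly_parity_odd_0[of "pderiv P"] poly_parity_pderiv[of P 1]
      by (intro t_rel_gauss_poly) auto
    show "poly_parity (scaled_hermite_poly s n) 1 \<and> degree (scaled_hermite_poly s n) \<le> n"
      using poly_parity_scaled_hermite_poly[of s n] True degree_scaled_hermite_poly[OF \<open>s > 0\<close>] by simp
  qed (use \<open>s > 0\<close> in \<open>auto simp: t_poly_invariant hermite_moment_t_poly dest: t_rel_L2\<close>)
  have "eigvec \<epsilon> n \<notin> D_series \<epsilon> t_rel L2_even"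
    unfolding eigvec_eq_gauss_poly[OF assms s_def] using herm_const_normalizes[OF assms s_def]
      powr_quarter_squared[OF assms] by (intro not_in_D_series) (simp_all add: s_def)
  then show ?thesis
    by (simp add: D_S_def)
next
  case False
  have "\<not> (AE x in lborel. eigvec \<epsilon> n (- x) = 1 * eigvec \<epsilon> n x)"
    using False L2_inner_eigvec_self[OF assms]
    by (intro not_AE_parity[where z = "(-1) ^ n"] eigvec_minus) auto
  then show ?thesis
    by (auto simp: D_S_def D_series_def L2_even_def)
qed

lemma eigvec_not_in_D_Sstar:
  assumes "\<epsilon> > 0"
  shows "eigvec \<epsilon> n \<notin> D_Sstar \<epsilon>"
proof (cases "odd n")
  case True
  define s where "s = \<epsilon> powr (1 / 4)"
  have "s > 0"
    using assms by (simp add: s_def)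
  interpret gaussian_ladder tadj_rel "tadj_poly (1 / (2 * s\<^sup>2))" "\<lambda>P. poly_parity P (-1) \<and> degree P \<le> n" s n
  proof
    show "AE x in lborel. w x = (- \<i> * a) * complex_of_real (gauss_poly (1 / (2 * s\<^sup>2)) (tadj_poly (1 / (2 * s\<^sup>2)) P) x)"
      if "tadj_rel g w" "AE x in lborel. g x = a * complex_of_real (gauss_poly (1 / (2 * s\<^sup>2)) P x)"
        "poly_parity P (-1) \<and> degree P \<le> n" for g w a P
      using that \<open>s > 0\<close> poly_parity_odd_0[of P] by (intro tadj_rel_gauss_poly) auto
    show "poly_parity (scaled_hermite_poly s n) (-1) \<and> degree (scaled_hermite_poly s n) \<le> n"
      using poly_parity_scaled_hermite_poly[of s n] True degree_scaled_hermite_poly[OF \<open>s > 0\<close>] by simp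
  qed (use \<open>s > 0\<close> poly_parity_odd_0 in \<open>auto simp: tadj_poly_invariant hermite_moment_tadj_poly tadj_rel_def\<close>)
  have "eigvec \<epsilon> n \<notin> D_series \<epsilon> tadj_rel L2_odd"
    unfolding eigvec_eq_gauss_poly[OF assms s_def] using herm_const_normalizes[OF assms s_def]
      powr_quarter_squared[OF assms] by (intro not_in_D_series) (simp_all add: s_def)
  then show ?thesis
    by (simp add: D_Sstar_def)
next
  case False
  have "\<not> (AE x in lborel. eigvec \<epsilon> n (- x) = -1 * eigvec \<epsilon> n x)"
    using False L2_inner_eigvec_self[OF assms]
    by (intro not_AE_parity[where z = "(-1) ^ n"] eigvec_minus) auto
  then show ?thesis
    by (auto simp: D_Sstar_def D_series_def L2_odd_def)
qed

theorem corollary3p10: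
  fixes \<epsilon> :: real and n :: nat
  assumes "0 < \<epsilon>" and "\<epsilon> \<le> 1"
  shows "eigvec \<epsilon> n \<notin> D_S \<epsilon> \<and> eigvec \<epsilon> n \<notin> D_Sstar \<epsilon>"
  using eigvec_not_in_D_S[OF assms(1)] eigvec_not_in_D_Sstar[OF assms(1)] by blast

end
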